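(* Let $L, M, N$ be positive integers and $\sigma_w^2>0$. For each $n\in\{1,\dots,N\}$ let $\bm{s}_n\in\mathbb{C}^L$, $\overline{\bm{h}}_n\in\mathbb{C}^M$, and let $\bm{R}_n\in\mathbb{C}^{M\times M}$ be Hermitian positive semidefinite with $r_n=\operatorname{rank}(\bm{R}_n)$; let $\bm{R}_n^{1/2}\in\mathbb{C}^{M\times r_n}$ satisfy $\bm{R}_n^{1/2}(\bm{R}_n^{1/2})^H=\bm{R}_n$, and set $\bm{X}_n=\bm{R}_n^{1/2}\otimes\bm{s}_n\in\mathbb{C}^{LM\times r_n}$. Let $\bm{y}\in\mathbb{C}^{LM}$ be given. For $\bm{a}\in[0,1]^N$ define $$\bm{\Sigma}_{\bm{a}}=\sum_{n=1}^N a_n\,\bm{R}_n\otimes(\bm{s}_n\bm{s}_n^H)+\sigma_w^2\bm{I}_{LM},\qquad \overline{\bm{y}}_{\bm{a}}=\sum_{n=1}^N a_n\,\overline{\bm{h}}_n\otimes\bm{s}_n,$$ $$f(\bm{a})=\log|\bm{\Sigma}_{\bm{a}}|+(\bm{y}-\overline{\bm{y}}_{\bm{a}})^H\bm{\Sigma}_{\bm{a}}^{-1}(\bm{y}-\overline{\bm{y}}_{\bm{a}}).$$ Let $\ell>0$ be a Lipschitz constant of $\nabla f$ on $[0,1]^N$. For $\bm{a}\in[0,1]^N$ and $n\in\{1,\dots,N\}$, write $\bm{b}_n=\overline{\bm{h}}_n\otimes\bm{s}_n$, $\bm{r}=\bm{y}-\overline{\bm{y}}_{\bm{a}}$, $\bm{\Sigma}=\bm{\Sigma}_{\bm{a}}$,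 $\bm{G}_n=\bm{X}_n^H\bm{\Sigma}^{-1}\bm{X}_n$, and define the quartic polynomial in $d\in\mathbb{R}$ $$\begin{aligned}p_{\mathrm{approx}}(d)={}&f(\bm{a})+d\,\operatorname{tr}(\bm{G}_n)-2d\operatorname{Re}\big(\bm{r}^H\bm{\Sigma}^{-1}\bm{b}_n\big)+d^2\,\bm{b}_n^H\bm{\Sigma}^{-1}\bm{b}_n\\&-d\,\bm{r}^H\bm{\Sigma}^{-1}\bm{X}_n(\bm{I}_{r_n}-d\,\bm{G}_n)\bm{X}_n^H\bm{\Sigma}^{-1}\bm{r}\\&+2d^2\operatorname{Re}\big(\bm{r}^H\bm{\Sigma}^{-1}\bm{X}_n(\bm{I}_{r_n}-d\,\bm{G}_n)\bm{X}_n^H\bm{\Sigma}^{-1}\bm{b}_n\big)\\&-d^3\,\bm{b}_n^H\bm{\Sigma}^{-1}\bm{X}_n(\bm{I}_{r_n}-d\,\bm{G}_n)\bm{X}_n^H\bm{\Sigma}^{-1}\bm{b}_n.\end{aligned}$$ Then there exists a constant $c>0$ such that for every $\bm{a}\in[0,1]^N$, every $n\in\{1,\dots,N\}$ and every $\mu\ge \ell+c$, any minimizer $\bar d$ of $p_{\mathrm{approx}}(d)+\frac{\mu}{2}d^2$ over $d\in[-a_n,1-a_n]$ satisfies $$f(\bm{a}+\bar d\,\bm{e}_n)\le f(\bm{a})-\frac{[\mathcal{V}(\bm{a})]_n^2}{2(\mu+c)},$$ where $\bm{e}_n$ is the $n$-th standard basis vector of $\mathbb{R}^N$ and $\mathcal{V}(\bm{a})=\big|\operatorname{Proj}(\bm{a}-\nabla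 f(\bm{a}))-\bm{a}\big|\in\mathbb{R}^N_+$, with $\operatorname{Proj}$ the coordinatewise projection onto $[0,1]$ and $|\cdot|$ the coordinatewise absolute value.
   Context: $|\cdot|$ applied to a matrix denotes its determinant; $\otimes$ is the Kronecker product; $(\cdot)^H$ is conjugate transpose. The gradient of $f$ has components $[\nabla f(\bm{a})]_n=\operatorname{tr}(\bm{X}_n^H\bm{\Sigma}_{\bm{a}}^{-1}\bm{X}_n)-\|\bm{X}_n^H\bm{\Sigma}_{\bm{a}}^{-1}(\bm{y}-\overline{\bm{y}}_{\bm{a}})\|_2^2-2\operatorname{Re}\big((\bm{y}-\overline{\bm{y}}_{\bm{a}})^H\bm{\Sigma}_{\bm{a}}^{-1}(\overline{\bm{h}}_n\otimes\bm{s}_n)\big)$. The function $f$ is the negative log-likelihood (up to constants) of the MLE device activity detection problem, minimized over $\bm{a}\in[0,1]^N$. *)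

theory Defs
  imports "Jordan_Normal_Form.Schur_Decomposition" "Jordan_Normal_Form.DL_Rank"
    "Jordan_Normal_Form.Gauss_Jordan_Elimination"
begin

(* Devices are indexed 0-based: n \<in> {0..<N}.  Vectors a \<in> R^N are functions nat \<Rightarrow> real,
   only the entries below N matter. *)

definition kron :: "complex mat \<Rightarrow> complex mat \<Rightarrow> complex mat" where
  "kron A B = mat (dim_row A * dim_row B) (dim_col A * dim_col B)
     (\<lambda>(i,j). A $$ (i div dim_row B, j div dim_col B) * B $$ (i mod dim_row B, j mod dim_col B))"

definition kron_vec :: "complex vec \<Rightarrow> complex vec \<Rightarrow> complex vec" where
  "kron_vec u v = vec (dim_vec u * dim_vec v) (\<lambda>i. u $ (i div dim_vec v) * v $ (i mod dim_vec v))"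

definition mtrace :: "complex mat \<Rightarrow> complex" where
  "mtrace A = (\<Sum>i<dim_row A. A $$ (i,i))"

definition hform :: "complex vec \<Rightarrow> complex mat \<Rightarrow> complex vec \<Rightarrow> complex" where
  "hform u A v = conjugate u \<bullet> (A *\<^sub>v v)"

definition vnorm2 :: "complex vec \<Rightarrow> real" where
  "vnorm2 v = (\<Sum>i<dim_vec v. (cmod (v $ i))^2)"

definition minv :: "complex mat \<Rightarrow> complex mat" where
  "minv A = the (mat_inverse A)"

definition hermitian_psd :: "nat \<Rightarrow> complex mat \<Rightarrow> bool" where
  "hermitian_psd m A \<longleftrightarrow> A \<in> carrier_mat m m \<and> mat_adjoint A = A \<and>
     (\<forall>v \<in> carrier_vec m. 0 \<le> Re (hform v A v))"

definition outer :: "complex vec \<Rightarrow> complex mat" where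
  "outer s = mat (dim_vec s) (dim_vec s) (\<lambda>(i,j). s $ i * cnj (s $ j))"

definition Sig :: "nat \<Rightarrow> nat \<Rightarrow> nat \<Rightarrow> (nat \<Rightarrow> complex vec) \<Rightarrow> (nat \<Rightarrow> complex mat) \<Rightarrow> real
    \<Rightarrow> (nat \<Rightarrow> real) \<Rightarrow> complex mat" where
  "Sig N L M s R sw2 a = mat (M*L) (M*L) (\<lambda>(i,j).
      (\<Sum>n<N. complex_of_real (a n) * kron (R n) (outer (s n)) $$ (i,j))
      + (if i = j then complex_of_real sw2 else 0))"

definition bvec :: "(nat \<Rightarrow> complex vec) \<Rightarrow> (nat \<Rightarrow> complex vec) \<Rightarrow> nat \<Rightarrow> complex vec" where
  "bvec s hb n = kron_vec (hb n) (s n)"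

definition ybar :: "nat \<Rightarrow> nat \<Rightarrow> nat \<Rightarrow> (nat \<Rightarrow> complex vec) \<Rightarrow> (nat \<Rightarrow> complex vec)
    \<Rightarrow> (nat \<Rightarrow> real) \<Rightarrow> complex vec" where
  "ybar N L M s hb a = vec (M*L) (\<lambda>i. \<Sum>n<N. complex_of_real (a n) * bvec s hb n $ i)"

definition resid where
  "resid N L M s hb y a = y - ybar N L M s hb a"

definition Xm :: "nat \<Rightarrow> (nat \<Rightarrow> complex vec) \<Rightarrow> (nat \<Rightarrow> complex mat) \<Rightarrow> nat \<Rightarrow> complex mat" where
  "Xm L s Rh n = kron (Rh n) (mat_of_cols L [s n])"

(* f(a) = log|Sigma_a| + (y - ybar_a)^H Sigma_a^{-1} (y - ybar_a)  (both terms real) *)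
definition fobj where
  "fobj N L M s hb R sw2 y a =
     ln (Re (det (Sig N L M s R sw2 a)))
     + Re (hform (resid N L M s hb y a) (minv (Sig N L M s R sw2 a)) (resid N L M s hb y a))"

definition gradf where
  "gradf N L M s hb R Rh sw2 y a n =
    (let Si = minv (Sig N L M s R sw2 a); X = Xm L s Rh n; r = resid N L M s hb y a in
     Re (mtrace (mat_adjoint X * Si * X))
     - vnorm2 ((mat_adjoint X * Si) *\<^sub>v r)
     - 2 * Re (hform r Si (bvec s hb n)))"

definition p_approx where
  "p_approx N L M s hb R Rh sw2 y a n d =
    (let Si = minv (Sig N L M s R sw2 a); X = Xm L s Rh n; r = resid N L M s hb y a;
         b = bvec s hb n; G = mat_adjoint X * Si * X;
         Q = Si * X * (1\<^sub>m (dim_col X) - complex_of_real d \<cdot>\<^sub>m G) * mat_adjoint X * Si in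
     fobj N L M s hb R sw2 y a + d * Re (mtrace G) - 2 * d * Re (hform r Si b)
     + d^2 * Re (hform b Si b) - d * Re (hform r Q r)
     + 2 * d^2 * Re (hform r Q b) - d^3 * Re (hform b Q b))"

definition in_box :: "nat \<Rightarrow> (nat \<Rightarrow> real) \<Rightarrow> bool" where
  "in_box N a \<longleftrightarrow> (\<forall>n<N. 0 \<le> a n \<and> a n \<le> 1)"

definition proj01 :: "real \<Rightarrow> real" where
  "proj01 x = max 0 (min 1 x)"

definition Vres where
  "Vres N L M s hb R Rh sw2 y a n = \<bar>proj01 (a n - gradf N L M s hb R Rh sw2 y a n) - a n\<bar>"

end

theory Submission
  imports Defs
begin

(* For a \<ge> 0 the covariance \<Sigma>_a = \<Sum> a_k B_k + \<sigma>_w^2 I dominates \<sigma>_w^2 I, so \<Sigma>_a^-1 has norm at most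
   1/\<sigma>_w^2 and log det \<Sigma>_a is well defined.  Moving coordinate n by d adds d B_n to \<Sigma>_a.  The
   resolvent identity and the expansion det (I + d C) = 1 + d tr C + O(d^2) then show that both
   f (a + d e_n) (from above) and p_approx (d) (in absolute value) agree with the linearization
   f (a) + [\<nabla>f (a)]_n d up to K d^2, with K uniform over the box because inverses and residuals are
   uniformly bounded there.  A minimizer of p_approx (d) + \<mu>/2 d^2 is then at least as good as a
   clipped gradient step with step size 1/(\<mu> + 2K), which yields the claim with c = 1 + 4K. *)

section \<open>Squared norms and operator bounds\<close>

lemma vnorm2_nonneg: "0 \<le> vnorm2 v"
  unfolding vnorm2_def by (auto intro: sum_nonneg)

lemma conjugate_scalar_prod_self: "conjugate v \<bullet> v = complex_of_real (vnorm2 v)"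
proof -
  have "cnj z * z = (complex_of_real (cmod z))^2" for z
    using complex_norm_square[of z] by (simp add: mult.commute)
  then show ?thesis
    unfolding vnorm2_def scalar_prod_def by (simp add: lessThan_atLeast0)
qed

lemma vnorm2_entry_le: "i < dim_vec v \<Longrightarrow> (cmod (v $ i))^2 \<le> vnorm2 v"
  unfolding vnorm2_def by (rule member_le_sum) auto

lemma vnorm2_eq_0D:
  assumes "v \<in> carrier_vec n" and "vnorm2 v = 0"
  shows "v = 0\<^sub>v n"
proof (rule eq_vecI)
  fix i assume "i < dim_vec (0\<^sub>v n)"
  with assms vnorm2_entry_le[of i v] show "v $ i = 0\<^sub>v n $ i" by simp
qed (use assms in simp)

lemma sum_mult_squared_le:
  fixes u v :: "nat \<Rightarrow> real"
  shows "(\<Sum>i\<in>A. u i * v i)^2 \<le> (\<Sum>i\<in>A. (u i)^2) * (\<Sum>i\<in>A. (v i)^2)"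
proof -
  have "0 \<le> (\<Sum>i\<in>A. \<Sum>j\<in>A. (u i * v j - u j * v i)^2)"
    by (intro sum_nonneg) auto
  also have "\<dots> = (\<Sum>i\<in>A. \<Sum>j\<in>A. (u i)^2 * (v j)^2) + (\<Sum>i\<in>A. \<Sum>j\<in>A. (u j)^2 * (v i)^2)
       - 2 * (\<Sum>i\<in>A. \<Sum>j\<in>A. (u i * v i) * (u j * v j))"
    by (simp add: power2_eq_square algebra_simps sum_subtractf sum.distrib sum_distrib_left)
  also have "(\<Sum>i\<in>A. \<Sum>j\<in>A. (u j)^2 * (v i)^2) = (\<Sum>i\<in>A. \<Sum>j\<in>A. (u i)^2 * (v j)^2)"
    by (rule sum.swap)
  finally show ?thesis
    by (simp add: sum_product power2_eq_square)
qed

lemma norm_sum_mult_squared_le: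
  fixes u v :: "nat \<Rightarrow> complex"
  shows "(cmod (\<Sum>i\<in>A. u i * v i))^2 \<le> (\<Sum>i\<in>A. (cmod (u i))^2) * (\<Sum>i\<in>A. (cmod (v i))^2)"
proof -
  have "cmod (\<Sum>i\<in>A. u i * v i) \<le> (\<Sum>i\<in>A. cmod (u i) * cmod (v i))"
    by (rule order_trans[OF norm_sum]) (simp add: norm_mult)
  then have "(cmod (\<Sum>i\<in>A. u i * v i))^2 \<le> (\<Sum>i\<in>A. cmod (u i) * cmod (v i))^2"
    by (simp add: power_mono)
  also have "\<dots> \<le> (\<Sum>i\<in>A. (cmod (u i))^2) * (\<Sum>i\<in>A. (cmod (v i))^2)"
    by (rule sum_mult_squared_le)
  finally show ?thesis .
qed

lemma cmod_scalar_prod_squared_le: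
  assumes "u \<in> carrier_vec n" and "v \<in> carrier_vec n"
  shows "(cmod (conjugate u \<bullet> v))^2 \<le> vnorm2 u * vnorm2 v"
  using assms norm_sum_mult_squared_le[of "\<lambda>i. cnj (u $ i)" "\<lambda>i. v $ i" "{0..<n}"]
  unfolding vnorm2_def scalar_prod_def by (simp add: lessThan_atLeast0)

lemma le_one_plus_square: "(x :: real) \<le> 1 + x^2"
  using zero_le_power2[of "x - 1/2"] by (simp add: power2_eq_square algebra_simps)

definition fro :: "complex mat \<Rightarrow> real" where
  "fro A = (\<Sum>i<dim_row A. \<Sum>j<dim_col A. (cmod (A $$ (i,j)))^2)"

lemma fro_nonneg: "0 \<le> fro A"
  unfolding fro_def by (auto intro!: sum_nonneg)

lemma vnorm2_col_le_fro: "j < dim_col A \<Longrightarrow> vnorm2 (col A j) \<le> fro A"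
  unfolding vnorm2_def fro_def
  by (subst sum.swap) (auto intro!: member_le_sum[of j] sum_nonneg)

definition op_bounded :: "real \<Rightarrow> complex mat \<Rightarrow> bool" where
  "op_bounded c A \<longleftrightarrow> (\<forall>v \<in> carrier_vec (dim_col A). vnorm2 (A *\<^sub>v v) \<le> c * vnorm2 v)"

lemma op_bounded_fro: "op_bounded (fro A) A"
  unfolding op_bounded_def
proof
  fix v :: "complex vec" assume v: "v \<in> carrier_vec (dim_col A)"
  have "vnorm2 (A *\<^sub>v v) = (\<Sum>i<dim_row A. (cmod (\<Sum>j\<in>{0..<dim_col A}. A $$ (i,j) * v $ j))^2)"
    using v unfolding vnorm2_def by (simp add: scalar_prod_def)
  also have "\<dots> \<le> (\<Sum>i<dim_row A. (\<Sum>j<dim_col A. (cmod (A $$ (i,j)))^2) * vnorm2 v)"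
    using v norm_sum_mult_squared_le[of "\<lambda>j. A $$ (_, j)" "\<lambda>j. v $ j"]
    unfolding vnorm2_def by (intro sum_mono) (simp add: lessThan_atLeast0)
  also have "\<dots> = fro A * vnorm2 v"
    unfolding fro_def by (simp add: sum_distrib_right)
  finally show "vnorm2 (A *\<^sub>v v) \<le> fro A * vnorm2 v" .
qed

lemma op_bounded_mult:
  assumes A: "A \<in> carrier_mat n k" and B: "B \<in> carrier_mat k l"
    and "op_bounded c A" and "op_bounded c' B" and "0 \<le> c"
  shows "op_bounded (c * c') (A * B)"
  unfolding op_bounded_def
proof
  fix v :: "complex vec" assume "v \<in> carrier_vec (dim_col (A * B))"
  then have v: "v \<in> carrier_vec l" using B by simp
  have "vnorm2 ((A * B) *\<^sub>v v) = vnorm2 (A *\<^sub>v (B *\<^sub>v v))"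
    using A B v by simp
  also have "\<dots> \<le> c * vnorm2 (B *\<^sub>v v)"
    using assms(3) A B v unfolding op_bounded_def by simp
  also have "\<dots> \<le> c * (c' * vnorm2 v)"
    using assms(4,5) B v unfolding op_bounded_def by (simp add: mult_left_mono)
  finally show "vnorm2 ((A * B) *\<^sub>v v) \<le> c * c' * vnorm2 v" by simp
qed

lemma mult_mat_entry_squared_le:
  assumes A: "A \<in> carrier_mat n k" and B: "B \<in> carrier_mat k l"
    and c: "op_bounded c A" "0 \<le> c" and i: "i < n" and j: "j < l"
  shows "(cmod ((A * B) $$ (i,j)))^2 \<le> c * fro B"
proof -
  have "(A * B) $$ (i,j) = (A *\<^sub>v col B j) $ i"
    using A B i j by simp
  then have "(cmod ((A * B) $$ (i,j)))^2 \<le> vnorm2 (A *\<^sub>v col B j)"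
    using vnorm2_entry_le[of i "A *\<^sub>v col B j"] A i by simp
  also have "\<dots> \<le> c * vnorm2 (col B j)"
    using c A B j unfolding op_bounded_def by simp
  also have "\<dots> \<le> c * fro B"
    using B j c by (intro mult_left_mono vnorm2_col_le_fro) auto
  finally show ?thesis .
qed

(* 1 + \<xi> c \<zeta> instead of a square root, via |w| \<le> 1 + |w|^2: only uniformity of the bound matters. *)

lemma cmod_hform_le:
  assumes A: "A \<in> carrier_mat n n" and c: "op_bounded c A" "0 \<le> c"
    and x: "x \<in> carrier_vec n" "vnorm2 x \<le> \<xi>" and z: "z \<in> carrier_vec n" "vnorm2 z \<le> \<zeta>"
  shows "cmod (hform x A z) \<le> 1 + \<xi> * (c * \<zeta>)"
proof -
  have "(cmod (hform x A z))^2 \<le> vnorm2 x * vnorm2 (A *\<^sub>v z)"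
    unfolding hform_def using A x z by (intro cmod_scalar_prod_squared_le) auto
  also have "\<dots> \<le> \<xi> * (c * \<zeta>)"
  proof (rule mult_mono)
    show "vnorm2 (A *\<^sub>v z) \<le> c * \<zeta>"
      using c A z order_trans[OF _ mult_left_mono[OF z(2) c(2)]] unfolding op_bounded_def by fastforce
  qed (use x(2) vnorm2_nonneg[of x] vnorm2_nonneg[of "A *\<^sub>v z"] in auto)
  finally show ?thesis
    using le_one_plus_square[of "cmod (hform x A z)"] by linarith
qed

section \<open>Adjoints and Hermitian forms\<close>

lemma dim_mat_adjoint [simp]:
  "dim_row (mat_adjoint A) = dim_col A" "dim_col (mat_adjoint A) = dim_row A"
  unfolding mat_adjoint_def by auto

lemma mat_adjoint_carrier [simp]: "A \<in> carrier_mat n k \<Longrightarrow> mat_adjoint A \<in> carrier_mat k n"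
  unfolding carrier_mat_def by simp

lemma index_mat_adjoint [simp]:
  "i < dim_col A \<Longrightarrow> j < dim_row A \<Longrightarrow> mat_adjoint A $$ (i,j) = cnj (A $$ (j,i))"
  unfolding mat_adjoint_def by (simp add: mat_of_rows_index)

lemma mat_adjoint_adjoint [simp]: "mat_adjoint (mat_adjoint A) = (A :: complex mat)"
  by (rule eq_matI) auto

lemma mat_adjoint_one [simp]: "mat_adjoint (1\<^sub>m n :: complex mat) = 1\<^sub>m n"
  by (rule eq_matI) auto

lemma mat_adjoint_mult:
  fixes A B :: "complex mat"
  assumes A: "A \<in> carrier_mat n k" and B: "B \<in> carrier_mat k l"
  shows "mat_adjoint (A * B) = mat_adjoint B * mat_adjoint A"
proof (rule eq_matI)
  fix i j assume "i < dim_row (mat_adjoint B * mat_adjoint A)" "j < dim_col (mat_adjoint B * mat_adjoint A)"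
  then have ij: "i < l" "j < n" using assms by auto
  have "mat_adjoint (A * B) $$ (i,j) = (\<Sum>t\<in>{0..<k}. cnj (B $$ (t,i)) * cnj (A $$ (j,t)))"
    using assms ij by (simp add: scalar_prod_def mult.commute)
  also have "\<dots> = (mat_adjoint B * mat_adjoint A) $$ (i,j)"
    using assms ij by (simp add: scalar_prod_def)
  finally show "mat_adjoint (A * B) $$ (i,j) = (mat_adjoint B * mat_adjoint A) $$ (i,j)" .
qed (use assms in auto)

lemma scalar_prod_mat_adjoint:
  fixes A :: "complex mat"
  assumes A: "A \<in> carrier_mat n k" and w: "w \<in> carrier_vec k" and z: "z \<in> carrier_vec n"
  shows "conjugate (A *\<^sub>v w) \<bullet> z = conjugate w \<bullet> (mat_adjoint A *\<^sub>v z)"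
proof -
  have "conjugate (A *\<^sub>v w) \<bullet> z = (\<Sum>i\<in>{0..<n}. \<Sum>j\<in>{0..<k}. cnj (w $ j) * (cnj (A $$ (i,j)) * z $ i))"
    using assms by (simp add: scalar_prod_def sum_distrib_right sum_distrib_left mult_ac)
  also have "\<dots> = (\<Sum>j\<in>{0..<k}. cnj (w $ j) * (\<Sum>i\<in>{0..<n}. cnj (A $$ (i,j)) * z $ i))"
    by (subst sum.swap) (simp add: sum_distrib_left)
  also have "\<dots> = conjugate w \<bullet> (mat_adjoint A *\<^sub>v z)"
    using assms by (simp add: scalar_prod_def)
  finally show ?thesis .
qed

lemma smult_mat_mult_vec:
  assumes "A \<in> carrier_mat n k" "v \<in> carrier_vec k"
  shows "(c \<cdot>\<^sub>m A) *\<^sub>v v = c \<cdot>\<^sub>v (A *\<^sub>v (v :: complex vec))"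
  by (rule eq_vecI) (use assms in \<open>auto simp: scalar_prod_def sum_distrib_left mult_ac\<close>)

lemma hform_double_sum:
  assumes "A \<in> carrier_mat n n" "u \<in> carrier_vec n" "v \<in> carrier_vec n"
  shows "hform u A v = (\<Sum>i<n. \<Sum>j<n. cnj (u $ i) * A $$ (i,j) * v $ j)"
  using assms unfolding hform_def scalar_prod_def
  by (simp add: lessThan_atLeast0 sum_distrib_left mult.assoc scalar_prod_def)

lemma hform_add:
  assumes "A \<in> carrier_mat n n" "B \<in> carrier_mat n n" "u \<in> carrier_vec n" "v \<in> carrier_vec n"
  shows "hform u (A + B) v = hform u A v + hform u B v"
  using assms unfolding hform_def by (simp add: add_mult_distrib_mat_vec scalar_prod_add_distrib[of _ n])

lemma hform_minus:
  assumes "A \<in> carrier_mat n n" "B \<in> carrier_mat n n" "u \<in> carrier_vec n" "v \<in> carrier_vec n"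
  shows "hform u (A - B) v = hform u A v - hform u B v"
  using assms unfolding hform_def by (simp add: minus_mult_distrib_mat_vec scalar_prod_minus_distrib[of _ n])

lemma hform_smult:
  assumes "A \<in> carrier_mat n n" "u \<in> carrier_vec n" "v \<in> carrier_vec n"
  shows "hform u (c \<cdot>\<^sub>m A) v = c * hform u A v"
  using assms unfolding hform_def by (simp add: smult_mat_mult_vec[of _ n n])

lemma hform_diff_smult_mat:
  assumes "A \<in> carrier_mat n n" "B \<in> carrier_mat n n" "x \<in> carrier_vec n" "z \<in> carrier_vec n"
  shows "hform x (A - c \<cdot>\<^sub>m B) z = hform x A z - c * hform x B z"
  using assms by (simp add: hform_minus[of _ n] hform_smult[of _ n])

lemma hform_diff_smult_left:
  assumes "A \<in> carrier_mat n n" "x \<in> carrier_vec n" "y \<in> carrier_vec n" "z \<in> carrier_vec n"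
  shows "hform (x - complex_of_real d \<cdot>\<^sub>v y) A z = hform x A z - complex_of_real d * hform y A z"
  using assms unfolding hform_def by (simp add: scalar_prod_def sum_subtractf sum_distrib_left algebra_simps)

lemma hform_diff_smult_right:
  assumes "A \<in> carrier_mat n n" "x \<in> carrier_vec n" "z \<in> carrier_vec n" "w \<in> carrier_vec n"
  shows "hform x A (z - c \<cdot>\<^sub>v w) = hform x A z - c * hform x A w"
  using assms unfolding hform_def
  by (simp add: mult_minus_distrib_mat_vec[of _ n n] mult_mat_vec[of _ n n] scalar_prod_minus_distrib[of _ n])

lemma hform_hermitian_swap:
  assumes A: "A \<in> carrier_mat n n" "mat_adjoint A = A"
    and u: "u \<in> carrier_vec n" and v: "v \<in> carrier_vec n"
  shows "hform u A v = cnj (hform v A u)"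
proof -
  have "cnj (hform v A u) = conjugate (A *\<^sub>v u) \<bullet> v"
    unfolding hform_def using A u v by (simp add: scalar_prod_def mult.commute)
  also have "\<dots> = hform u A v"
    unfolding hform_def using scalar_prod_mat_adjoint[OF A(1) u v] A(2) by simp
  finally show ?thesis by simp
qed

lemma hform_mult_adjoint_self:
  fixes X :: "complex mat"
  assumes X: "X \<in> carrier_mat n k" and v: "v \<in> carrier_vec n"
  shows "hform v (X * mat_adjoint X) v = complex_of_real (vnorm2 (mat_adjoint X *\<^sub>v v))"
proof -
  have "hform v (X * mat_adjoint X) v = conjugate v \<bullet> (X *\<^sub>v (mat_adjoint X *\<^sub>v v))"
    unfolding hform_def using assoc_mult_mat_vec[OF X mat_adjoint_carrier[OF X] v] by simp
  also have "\<dots> = conjugate (mat_adjoint X *\<^sub>v v) \<bullet> (mat_adjoint X *\<^sub>v v)"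
    using scalar_prod_mat_adjoint[OF mat_adjoint_carrier[OF X] v, of "mat_adjoint X *\<^sub>v v"] X v
    by (metis mat_adjoint_adjoint mat_adjoint_carrier mult_mat_vec_carrier)
  finally show ?thesis by (simp add: conjugate_scalar_prod_self)
qed

lemma det_hermitian_real:
  fixes A :: "complex mat"
  assumes A: "A \<in> carrier_mat n n" and h: "mat_adjoint A = A"
  shows "cnj (det A) = det A"
proof -
  have "cnj (det A) = (\<Sum>p\<in>{p. p permutes {0..<n}}. signof p * (\<Prod>i=0..<n. transpose_mat A $$ (i, p i)))"
    unfolding det_def'[OF A] cnj_sum cnj_prod
  proof (intro sum.cong refl)
    fix p assume "p \<in> {p. p permutes {0..<n}}"
    then have "i < n \<Longrightarrow> p i < n" for i by (auto dest: permutes_in_image)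
    moreover have "i < n \<Longrightarrow> j < n \<Longrightarrow> cnj (A $$ (i,j)) = A $$ (j,i)" for i j
      using A arg_cong[OF h, of "\<lambda>B. B $$ (j,i)"] by simp
    ultimately show "cnj (signof p * (\<Prod>i=0..<n. A $$ (i, p i)))
        = signof p * (\<Prod>i=0..<n. transpose_mat A $$ (i, p i))"
      using A by (simp add: cnj_prod)
  qed
  also have "\<dots> = det A"
    using A det_transpose[OF A] by (simp add: det_def'[of _ n])
  finally show ?thesis .
qed

lemma mtrace_mult_comm:
  fixes A B :: "complex mat"
  assumes A: "A \<in> carrier_mat n k" and B: "B \<in> carrier_mat k n"
  shows "mtrace (A * B) = mtrace (B * A)"
proof -
  have "mtrace (A * B) = (\<Sum>i<n. \<Sum>j<k. A $$ (i,j) * B $$ (j,i))"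
    unfolding mtrace_def using A B by (intro sum.cong) (auto simp: scalar_prod_def lessThan_atLeast0)
  also have "\<dots> = (\<Sum>j<k. \<Sum>i<n. B $$ (j,i) * A $$ (i,j))"
    by (subst sum.swap) (simp add: mult.commute)
  also have "\<dots> = mtrace (B * A)"
    unfolding mtrace_def using A B by (intro sum.cong) (auto simp: scalar_prod_def lessThan_atLeast0)
  finally show ?thesis .
qed

lemma kron_mult_adjoint:
  assumes Rh: "Rh \<in> carrier_mat M r" and s: "s \<in> carrier_vec L" and L: "0 < L"
  shows "kron Rh (mat_of_cols L [s]) * mat_adjoint (kron Rh (mat_of_cols L [s]))
       = kron (Rh * mat_adjoint Rh) (outer s)"
proof (rule eq_matI)
  let ?X = "kron Rh (mat_of_cols L [s])"
  fix i j assume "i < dim_row (kron (Rh * mat_adjoint Rh) (outer s))"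
    and "j < dim_col (kron (Rh * mat_adjoint Rh) (outer s))"
  then have ij: "i < M * L" "j < M * L" using assms unfolding kron_def outer_def by auto
  then have div: "i div L < M" "j div L < M" by (auto simp: less_mult_imp_div_less)
  have X: "?X $$ (a,t) = Rh $$ (a div L, t) * s $ (a mod L)" if "a < M * L" "t < r" for a t
    using assms that by (simp add: kron_def mat_of_cols_index less_mult_imp_div_less)
  have "(?X * mat_adjoint ?X) $$ (i,j) = (\<Sum>t\<in>{0..<r}. ?X $$ (i,t) * cnj (?X $$ (j,t)))"
    using assms ij unfolding kron_def by (simp add: scalar_prod_def)
  also have "\<dots> = (\<Sum>t\<in>{0..<r}. Rh $$ (i div L, t) * cnj (Rh $$ (j div L, t))) * (s $ (i mod L) * cnj (s $ (j mod L)))"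
    using ij by (simp add: X sum_distrib_right sum_distrib_left mult.commute mult.left_commute)
  also have "\<dots> = kron (Rh * mat_adjoint Rh) (outer s) $$ (i,j)"
    using assms ij div by (simp add: kron_def outer_def scalar_prod_def)
  finally show "(?X * mat_adjoint ?X) $$ (i,j) = kron (Rh * mat_adjoint Rh) (outer s) $$ (i,j)" .
qed (use assms in \<open>auto simp: kron_def outer_def\<close>)

section \<open>Coercive matrices\<close>

definition coercive :: "real \<Rightarrow> nat \<Rightarrow> complex mat \<Rightarrow> bool" where
  "coercive \<sigma> n A \<longleftrightarrow> A \<in> carrier_mat n n \<and> (\<forall>v \<in> carrier_vec n. \<sigma> * vnorm2 v \<le> Re (hform v A v))"

lemma coercive_det_nonzero:
  assumes c: "coercive \<sigma> n A" and \<sigma>: "0 < \<sigma>"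
  shows "det A \<noteq> 0"
proof
  assume "det A = 0"
  moreover have A: "A \<in> carrier_mat n n" using c unfolding coercive_def by simp
  ultimately obtain v where v: "v \<in> carrier_vec n" "v \<noteq> 0\<^sub>v n" "A *\<^sub>v v = 0\<^sub>v n"
    using det_0_iff_vec_prod_zero by blast
  then have "\<sigma> * vnorm2 v \<le> 0"
    using c unfolding coercive_def hform_def by force
  then have "vnorm2 v = 0"
    using \<sigma> vnorm2_nonneg[of v] by (simp add: mult_le_0_iff)
  then show False
    using vnorm2_eq_0D[OF v(1)] v(2) by simp
qed

lemma coercive_minv:
  assumes c: "coercive \<sigma> n A" and \<sigma>: "0 < \<sigma>"
  shows "minv A \<in> carrier_mat n n" "A * minv A = 1\<^sub>m n" "minv A * A = 1\<^sub>m n"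
proof -
  have A: "A \<in> carrier_mat n n" using c unfolding coercive_def by simp
  have "A \<in> Units (ring_mat TYPE(complex) n ())"
    by (rule det_non_zero_imp_unit[OF A coercive_det_nonzero[OF c \<sigma>]])
  then obtain B where B: "mat_inverse A = Some B"
    using mat_inverse(1)[OF A] by fastforce
  then show "minv A \<in> carrier_mat n n" "A * minv A = 1\<^sub>m n" "minv A * A = 1\<^sub>m n"
    using mat_inverse(2)[OF A B] unfolding minv_def by auto
qed

lemma coercive_minv_apply:
  assumes c: "coercive \<sigma> n A" and \<sigma>: "0 < \<sigma>" and w: "w \<in> carrier_vec n"
  shows "A *\<^sub>v (minv A *\<^sub>v w) = w"
proof -
  have "A \<in> carrier_mat n n" using c unfolding coercive_def by simp
  then show ?thesis
    using assoc_mult_mat_vec[OF _ coercive_minv(1)[OF c \<sigma>] w, symmetric] coercive_minv(2)[OF c \<sigma>] w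
    by simp
qed

lemma op_bounded_minv:
  assumes c: "coercive \<sigma> n A" and \<sigma>: "0 < \<sigma>"
  shows "op_bounded (1 / \<sigma>^2) (minv A)"
  unfolding op_bounded_def
proof
  fix w :: "complex vec" assume "w \<in> carrier_vec (dim_col (minv A))"
  then have w: "w \<in> carrier_vec n" using coercive_minv(1)[OF c \<sigma>] by simp
  define z where "z = minv A *\<^sub>v w"
  have z: "z \<in> carrier_vec n" unfolding z_def using coercive_minv(1)[OF c \<sigma>] w by simp
  have "\<sigma> * vnorm2 z \<le> Re (hform z A z)"
    using c z unfolding coercive_def by simp
  also have "hform z A z = conjugate z \<bullet> w"
    unfolding hform_def z_def coercive_minv_apply[OF c \<sigma> w] ..
  finally have "\<sigma> * vnorm2 z \<le> Re (conjugate z \<bullet> w)" .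
  also have "\<dots> \<le> cmod (conjugate z \<bullet> w)" by (rule complex_Re_le_cmod)
  finally have "(\<sigma> * vnorm2 z)^2 \<le> (cmod (conjugate z \<bullet> w))^2"
    using \<sigma> vnorm2_nonneg[of z] by (intro power_mono) auto
  also have "\<dots> \<le> vnorm2 z * vnorm2 w" by (rule cmod_scalar_prod_squared_le[OF z w])
  finally have "vnorm2 z * (\<sigma>^2 * vnorm2 z) \<le> vnorm2 z * vnorm2 w"
    by (simp add: power2_eq_square mult_ac)
  then have "\<sigma>^2 * vnorm2 z \<le> vnorm2 w \<or> vnorm2 z = 0"
    using vnorm2_nonneg[of z] by (metis mult_le_cancel_left_pos order_le_less)
  then show "vnorm2 (minv A *\<^sub>v w) \<le> 1 / \<sigma>^2 * vnorm2 w"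
    using \<sigma> vnorm2_nonneg[of w] unfolding z_def[symmetric] by (auto simp: field_simps)
qed

lemma hermitian_minv:
  assumes c: "coercive \<sigma> n A" and \<sigma>: "0 < \<sigma>" and h: "mat_adjoint A = A"
  shows "mat_adjoint (minv A) = minv A"
proof -
  have A: "A \<in> carrier_mat n n" using c unfolding coercive_def by simp
  note I = coercive_minv[OF c \<sigma>]
  let ?P = "minv A"
  have Pa: "mat_adjoint ?P \<in> carrier_mat n n" using I(1) by simp
  have "mat_adjoint ?P = (mat_adjoint ?P * A) * ?P"
    using I(2) assoc_mult_mat[OF Pa A I(1)] Pa right_mult_one_mat[OF Pa] by simp
  also have "mat_adjoint ?P * A = mat_adjoint (A * ?P)"
    using mat_adjoint_mult[OF A I(1)] h by simp
  finally show ?thesis using I by simp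
qed

lemma minv_add_eq:
  assumes c: "coercive \<sigma> n A" "coercive \<sigma> n (A + E)" and E: "E \<in> carrier_mat n n" and \<sigma>: "0 < \<sigma>"
  shows "minv (A + E) = minv A - minv (A + E) * E * minv A"
proof -
  have A: "A \<in> carrier_mat n n" using c unfolding coercive_def by simp
  note I = coercive_minv[OF c(1) \<sigma>] and I' = coercive_minv[OF c(2) \<sigma>]
  let ?P = "minv A" and ?P' = "minv (A + E)"
  have "?P = (?P' * (A + E)) * ?P"
    using I(1) I'(3) by simp
  also have "\<dots> = ?P' * ((A + E) * ?P)"
    using A E I(1) I'(1) by (intro assoc_mult_mat) auto
  also have "(A + E) * ?P = 1\<^sub>m n + E * ?P"
    using A E I(1,2) by (simp add: add_mult_distrib_mat[of _ n n])
  also have "?P' * (1\<^sub>m n + E * ?P) = ?P' + ?P' * E * ?P"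
    using mult_add_distrib_mat[OF I'(1) one_carrier_mat mult_carrier_mat[OF E I(1)]]
      assoc_mult_mat[OF I'(1) E I(1)] I'(1) by simp
  finally have P: "?P = ?P' + ?P' * E * ?P" .
  show ?thesis
  proof (rule eq_matI)
    fix i j assume "i < dim_row (?P - ?P' * E * ?P)" "j < dim_col (?P - ?P' * E * ?P)"
    then have ij: "i < n" "j < n" using I(1) I'(1) by auto
    then show "?P' $$ (i,j) = (?P - ?P' * E * ?P) $$ (i,j)"
      using arg_cong[OF P, of "\<lambda>B. B $$ (i,j)"] E I(1) I'(1) by simp
  qed (use I(1) I'(1) in auto)
qed

lemma coercive_segment:
  assumes c: "coercive \<sigma> n A" and t: "0 \<le> t" "t \<le> 1"
  shows "coercive \<sigma> n (complex_of_real ((1 - t) * \<sigma>) \<cdot>\<^sub>m 1\<^sub>m n + complex_of_real t \<cdot>\<^sub>m A)"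
  unfolding coercive_def
proof (intro conjI ballI)
  have A: "A \<in> carrier_mat n n" using c unfolding coercive_def by simp
  then show "complex_of_real ((1 - t) * \<sigma>) \<cdot>\<^sub>m 1\<^sub>m n + complex_of_real t \<cdot>\<^sub>m A \<in> carrier_mat n n"
    by simp
  fix v :: "complex vec" assume v: "v \<in> carrier_vec n"
  have "hform v (complex_of_real ((1 - t) * \<sigma>) \<cdot>\<^sub>m 1\<^sub>m n + complex_of_real t \<cdot>\<^sub>m A) v
      = complex_of_real ((1 - t) * \<sigma>) * hform v (1\<^sub>m n) v + complex_of_real t * hform v A v"
    using A v by (simp add: hform_add[of _ n] hform_smult[of _ n])
  also have "hform v (1\<^sub>m n) v = complex_of_real (vnorm2 v)"
    using v by (simp add: hform_def conjugate_scalar_prod_self)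
  finally have "Re (hform v (complex_of_real ((1 - t) * \<sigma>) \<cdot>\<^sub>m 1\<^sub>m n + complex_of_real t \<cdot>\<^sub>m A) v)
      = (1 - t) * \<sigma> * vnorm2 v + t * Re (hform v A v)"
    by simp
  moreover have "t * (\<sigma> * vnorm2 v) \<le> t * Re (hform v A v)"
    using c v t unfolding coercive_def by (intro mult_left_mono) auto
  ultimately show "\<sigma> * vnorm2 v \<le> Re (hform v (complex_of_real ((1 - t) * \<sigma>) \<cdot>\<^sub>m 1\<^sub>m n + complex_of_real t \<cdot>\<^sub>m A) v)"
    by (simp add: algebra_simps)
qed

text \<open>Along the segment from \<open>\<sigma> I\<close> to \<open>A\<close> every matrix is Hermitian and coercive, so its determinant
  is real and nonzero; since it starts at \<open>\<sigma>\<^sup>n > 0\<close>, continuity keeps it positive.\<close>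

lemma coercive_hermitian_det_pos:
  fixes A :: "complex mat"
  assumes c: "coercive \<sigma> n A" and \<sigma>: "0 < \<sigma>" and h: "mat_adjoint A = A"
  shows "0 < Re (det A)" "Im (det A) = 0"
proof -
  have A: "A \<in> carrier_mat n n" using c unfolding coercive_def by simp
  define H where "H t = complex_of_real ((1 - t) * \<sigma>) \<cdot>\<^sub>m 1\<^sub>m n + complex_of_real t \<cdot>\<^sub>m A" for t :: real
  have H: "H t \<in> carrier_mat n n" for t
    unfolding H_def using A by simp
  have H_index: "H t $$ (i,j) = complex_of_real ((1 - t) * \<sigma>) * (if i = j then 1 else 0) + complex_of_real t * A $$ (i,j)"
    if "i < n" "j < n" for t i j
    unfolding H_def using A that by simp
  have H_coercive: "coercive \<sigma> n (H t)" if "0 \<le> t" "t \<le> 1" for t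
    unfolding H_def using c that by (rule coercive_segment)
  have H_real: "Im (det (H t)) = 0" for t
  proof -
    have "mat_adjoint (H t) = H t"
    proof (rule eq_matI)
      fix i j assume "i < dim_row (H t)" "j < dim_col (H t)"
      then have ij: "i < n" "j < n" using H[of t] by auto
      then have "cnj (A $$ (j,i)) = A $$ (i,j)"
        using A arg_cong[OF h, of "\<lambda>B. B $$ (i,j)"] by simp
      then show "mat_adjoint (H t) $$ (i,j) = H t $$ (i,j)"
        using ij H[of t] by (simp add: H_index)
    qed (use H[of t] in auto)
    then show ?thesis
      using det_hermitian_real[OF H] by (metis cnj.simps(2) neg_equal_zero)
  qed
  define g where "g t = (\<Sum>p\<in>{p. p permutes {0..<n}}. signof p *
     (\<Prod>i=0..<n. complex_of_real ((1 - t) * \<sigma>) * (if i = p i then 1 else 0) + complex_of_real t * A $$ (i, p i)))" for t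
  have det_H: "det (H t) = g t" for t
    unfolding det_def'[OF H] g_def
    by (intro sum.cong refl arg_cong2[where f = "(*)"] prod.cong) (auto simp: H_index dest: permutes_in_image)
  have cont: "continuous_on {0..1} (\<lambda>t. Re (g t))"
    unfolding g_def by (intro continuous_intros)
  have H0: "H 0 = complex_of_real \<sigma> \<cdot>\<^sub>m 1\<^sub>m n" and H1: "H 1 = A"
    unfolding H_def using A by (auto intro!: eq_matI)
  have g0: "0 < Re (g 0)"
    using \<sigma> unfolding det_H[symmetric] H0 by simp
  show "0 < Re (det A)"
  proof (rule ccontr)
    assume "\<not> 0 < Re (det A)"
    then have "Re (g 1) \<le> 0" using H1 det_H[of 1] by simp
    then obtain t where t: "t \<in> {0..1}" "Re (g t) = 0"
      using IVT2'[of "\<lambda>t. Re (g t)" 1 0 0] g0 cont by force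
    then have "det (H t) = 0" using H_real[of t] det_H[of t] by (simp add: complex_eq_iff)
    then show False using coercive_det_nonzero[OF H_coercive \<sigma>] t(1) by auto
  qed
  show "Im (det A) = 0" using H_real[of 1] H1 by simp
qed

section \<open>Determinant of a perturbed identity\<close>

lemma norm_prod_one_plus_le:
  fixes w :: "nat \<Rightarrow> complex" and \<epsilon> :: real
  assumes "\<And>i. i \<in> I \<Longrightarrow> cmod (w i) \<le> \<epsilon>"
  shows "cmod (\<Prod>i\<in>I. 1 + w i) \<le> (1 + \<epsilon>) ^ card I"
proof -
  have "cmod (\<Prod>i\<in>I. 1 + w i) = (\<Prod>i\<in>I. cmod (1 + w i))" by (rule prod_norm[symmetric])
  also have "\<dots> \<le> (\<Prod>i\<in>I. 1 + \<epsilon>)"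
  proof (intro prod_mono conjI)
    fix i assume "i \<in> I"
    then show "cmod (1 + w i) \<le> 1 + \<epsilon>"
      using assms norm_triangle_ineq[of 1 "w i"] by force
  qed simp
  finally show ?thesis by simp
qed

lemma norm_prod_one_plus_minus_one_le:
  fixes w :: "nat \<Rightarrow> complex" and \<epsilon> :: real
  assumes "finite I" and "\<And>i. i \<in> I \<Longrightarrow> cmod (w i) \<le> \<epsilon>" and "0 \<le> \<epsilon>"
  shows "cmod ((\<Prod>i\<in>I. 1 + w i) - 1) \<le> card I * \<epsilon> * (1 + \<epsilon>) ^ card I"
  using assms
proof (induction I rule: finite_induct)
  case (insert j F)
  let ?P = "\<Prod>i\<in>F. 1 + w i" and ?k = "real (card F)"
  have P: "(\<Prod>i\<in>insert j F. 1 + w i) = (1 + w j) * ?P" and k: "card (insert j F) = card F + 1"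
    using insert by simp_all
  have "cmod ((1 + w j) * ?P - 1) \<le> cmod (?P - 1) + cmod (w j) * cmod ?P"
    using norm_triangle_ineq[of "?P - 1" "w j * ?P"] by (simp add: algebra_simps norm_mult)
  also have "\<dots> \<le> ?k * \<epsilon> * (1 + \<epsilon>) ^ card F + \<epsilon> * (1 + \<epsilon>) ^ card F"
    using insert norm_prod_one_plus_le[of F w \<epsilon>] by (intro add_mono mult_mono) auto
  also have "\<dots> \<le> (?k + 1) * \<epsilon> * (1 + \<epsilon>) ^ (card F + 1)"
    using insert(5) by (simp add: algebra_simps mult_left_mono)
  finally show ?case unfolding P k by (simp add: ac_simps)
qed simp

lemma norm_prod_one_plus_remainder_le:
  fixes w :: "nat \<Rightarrow> complex" and \<epsilon> :: real
  assumes "finite I" and "\<And>i. i \<in> I \<Longrightarrow> cmod (w i) \<le> \<epsilon>" and "0 \<le> \<epsilon>"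
  shows "cmod ((\<Prod>i\<in>I. 1 + w i) - 1 - (\<Sum>i\<in>I. w i)) \<le> (card I * \<epsilon>)^2 * (1 + \<epsilon>) ^ card I"
  using assms
proof (induction I rule: finite_induct)
  case (insert j F)
  let ?P = "\<Prod>i\<in>F. 1 + w i" and ?S = "\<Sum>i\<in>F. w i" and ?k = "real (card F)"
  have P: "(\<Prod>i\<in>insert j F. 1 + w i) = (1 + w j) * ?P" and S: "(\<Sum>i\<in>insert j F. w i) = w j + ?S"
    and k: "card (insert j F) = card F + 1"
    using insert by simp_all
  have eq: "(1 + w j) * ?P - 1 - (w j + ?S) = (?P - 1 - ?S) + w j * (?P - 1)"
    by (simp add: algebra_simps)
  have "cmod ((1 + w j) * ?P - 1 - (w j + ?S)) \<le> cmod (?P - 1 - ?S) + cmod (w j) * cmod (?P - 1)"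
    unfolding eq by (metis norm_triangle_ineq norm_mult)
  also have "\<dots> \<le> (?k * \<epsilon>)^2 * (1 + \<epsilon>) ^ card F + \<epsilon> * (?k * \<epsilon> * (1 + \<epsilon>) ^ card F)"
    using insert norm_prod_one_plus_minus_one_le[of F w \<epsilon>] by (intro add_mono mult_mono) auto
  also have "\<dots> \<le> ((?k + 1) * \<epsilon>)^2 * (1 + \<epsilon>) ^ (card F + 1)"
  proof -
    have "?k^2 + ?k \<le> (?k + 1)^2 * (1 + \<epsilon>)"
      using insert(5) by (simp add: power2_eq_square algebra_simps)
    then have "\<epsilon>^2 * (1 + \<epsilon>) ^ card F * (?k^2 + ?k) \<le> \<epsilon>^2 * (1 + \<epsilon>) ^ card F * ((?k + 1)^2 * (1 + \<epsilon>))"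
      using insert(5) by (intro mult_left_mono) auto
    then show ?thesis by (simp add: power2_eq_square algebra_simps)
  qed
  finally show ?case unfolding P S k by (simp add: ac_simps)
qed simp

lemma norm_prod_permutation_le:
  fixes e :: "nat \<Rightarrow> complex"
  assumes p: "p permutes {0..<n}" "p \<noteq> id" and "0 \<le> \<epsilon>"
    and e: "\<And>i. i < n \<Longrightarrow> cmod (e i) \<le> 1 + \<epsilon>" and e': "\<And>i. i < n \<Longrightarrow> p i \<noteq> i \<Longrightarrow> cmod (e i) \<le> \<epsilon>"
  shows "cmod (\<Prod>i=0..<n. e i) \<le> \<epsilon>^2 * (1 + \<epsilon>) ^ n"
proof -
  obtain i where i: "p i \<noteq> i" using p(2) by (metis eq_id_iff)
  define j where "j = p i"
  have ij: "i < n" "j < n" "i \<noteq> j"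
    using p(1) i unfolding j_def by (auto simp: permutes_def dest: permutes_in_image)
  have j: "p j \<noteq> j"
    using permutes_inj[OF p(1)] i unfolding j_def by (auto dest: injD)
  let ?f = "\<lambda>i. cmod (e i)" and ?I = "{0..<n} - {i} - {j}"
  have "cmod (\<Prod>i=0..<n. e i) = (\<Prod>k=0..<n. ?f k)"
    by (rule prod_norm[symmetric])
  also have "\<dots> = ?f i * (?f j * (\<Prod>k\<in>?I. ?f k))"
    using ij by (simp add: prod.remove[of _ i] prod.remove[of _ j])
  also have "\<dots> \<le> \<epsilon> * (\<epsilon> * (1 + \<epsilon>) ^ n)"
  proof (intro mult_mono)
    show "(\<Prod>k\<in>?I. ?f k) \<le> (1 + \<epsilon>) ^ n"
      using e assms(3) by (intro prod_le_power) (auto intro: card_mono[of "{0..<n}", simplified])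
  qed (use e' ij i j assms(3) in \<open>auto intro!: mult_nonneg_nonneg prod_nonneg\<close>)
  finally show ?thesis by (simp add: power2_eq_square mult_ac)
qed

lemma norm_det_sum_nonid_le:
  fixes E :: "complex mat" and \<epsilon> :: real
  assumes "0 \<le> \<epsilon>" and E: "\<And>i j. i < n \<Longrightarrow> j < n \<Longrightarrow> cmod (E $$ (i,j)) \<le> 1 + \<epsilon>"
    and E': "\<And>i j. i < n \<Longrightarrow> j < n \<Longrightarrow> i \<noteq> j \<Longrightarrow> cmod (E $$ (i,j)) \<le> \<epsilon>"
  shows "cmod (\<Sum>p\<in>{p. p permutes {0..<n}} - {id}. signof p * (\<Prod>i=0..<n. E $$ (i, p i)))
    \<le> fact n * (\<epsilon>^2 * (1 + \<epsilon>) ^ n)"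
proof -
  let ?Perm = "{p. p permutes {0..<n}}"
  have "cmod (\<Sum>p\<in>?Perm - {id}. signof p * (\<Prod>i=0..<n. E $$ (i, p i))) \<le> (\<Sum>p\<in>?Perm - {id}. \<epsilon>^2 * (1 + \<epsilon>) ^ n)"
  proof (rule order_trans[OF norm_sum sum_mono])
    fix p assume p: "p \<in> ?Perm - {id}"
    then have "i < n \<Longrightarrow> p i < n" for i by (auto dest: permutes_in_image)
    then have "cmod (\<Prod>i=0..<n. E $$ (i, p i)) \<le> \<epsilon>^2 * (1 + \<epsilon>) ^ n"
      using p assms by (intro norm_prod_permutation_le[of p n]) auto
    then show "cmod (signof p * (\<Prod>i=0..<n. E $$ (i, p i))) \<le> \<epsilon>^2 * (1 + \<epsilon>) ^ n"
      by (simp add: norm_mult sign_def)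
  qed
  also have "\<dots> \<le> fact n * (\<epsilon>^2 * (1 + \<epsilon>) ^ n)"
  proof -
    have "card (?Perm - {id}) \<le> card ?Perm"
      by (rule card_mono) (auto simp: finite_permutations)
    also have "card ?Perm = fact n"
      by (simp add: card_permutations)
    finally have "real (card (?Perm - {id})) \<le> fact n"
      by (metis of_nat_fact of_nat_le_iff)
    then show ?thesis
      using assms(1) by (simp add: mult_right_mono)
  qed
  finally show ?thesis .
qed

text \<open>\<open>det (I + d C) = 1 + d tr C + O(d\<^sup>2)\<close>: the identity permutation contributes
  \<open>\<Prod>(1 + d C\<^sub>i\<^sub>i)\<close>, and every other permutation picks at least two off-diagonal entries.\<close>

lemma det_one_plus_smult_expansion:
  fixes C :: "complex mat"
  assumes C: "C \<in> carrier_mat n n" and bound: "\<And>i j. i < n \<Longrightarrow> j < n \<Longrightarrow> cmod (C $$ (i,j)) \<le> \<gamma>"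
    and "0 \<le> \<gamma>" and d: "\<bar>d\<bar> \<le> 1"
  shows "cmod (det (1\<^sub>m n + complex_of_real d \<cdot>\<^sub>m C) - 1 - complex_of_real d * mtrace C)
    \<le> d^2 * (\<gamma>^2 * (n^2 + fact n) * (1 + \<gamma>) ^ n)"
proof -
  let ?E = "1\<^sub>m n + complex_of_real d \<cdot>\<^sub>m C" and ?Perm = "{p. p permutes {0..<n}}"
  define \<epsilon> where "\<epsilon> = \<bar>d\<bar> * \<gamma>"
  have \<epsilon>: "0 \<le> \<epsilon>" "\<epsilon> \<le> \<gamma>" "\<epsilon>^2 = d^2 * \<gamma>^2"
    using assms(3) d unfolding \<epsilon>_def by (auto simp: mult_left_le_one_le power_mult_distrib)
  have E: "?E \<in> carrier_mat n n" using C by simp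
  have E_index: "?E $$ (i,j) = (if i = j then 1 else 0) + complex_of_real d * C $$ (i,j)" if "i < n" "j < n" for i j
    using C that by simp
  have dC: "cmod (complex_of_real d * C $$ (i,j)) \<le> \<epsilon>" if "i < n" "j < n" for i j
    using bound[OF that] d unfolding \<epsilon>_def by (simp add: norm_mult mult_left_mono)
  define D where "D = (\<Prod>i=0..<n. 1 + complex_of_real d * C $$ (i,i))"
  define Rest where "Rest = (\<Sum>p\<in>?Perm - {id}. signof p * (\<Prod>i=0..<n. ?E $$ (i, p i)))"
  have det: "det ?E - 1 - complex_of_real d * mtrace C = (D - 1 - complex_of_real d * mtrace C) + Rest"
    unfolding D_def Rest_def det_def'[OF E] using E_index
    by (simp add: sum.remove[of ?Perm id] finite_permutations permutes_id)
  have "cmod (D - 1 - complex_of_real d * mtrace C) \<le> (n * \<epsilon>)^2 * (1 + \<epsilon>) ^ n"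
    using norm_prod_one_plus_remainder_le[of "{0..<n}" "\<lambda>i. complex_of_real d * C $$ (i,i)" \<epsilon>] dC \<epsilon>(1) C
    unfolding mtrace_def D_def by (simp add: sum_distrib_left lessThan_atLeast0)
  also have "\<dots> \<le> (n * \<epsilon>)^2 * (1 + \<gamma>) ^ n"
    using \<epsilon> by (intro mult_left_mono power_mono) auto
  also have "\<dots> = d^2 * (\<gamma>^2 * n^2 * (1 + \<gamma>) ^ n)"
    using \<epsilon>(3) by (simp add: power_mult_distrib)
  finally have D: "cmod (D - 1 - complex_of_real d * mtrace C) \<le> d^2 * (\<gamma>^2 * n^2 * (1 + \<gamma>) ^ n)" .
  have "cmod Rest \<le> fact n * (\<epsilon>^2 * (1 + \<epsilon>) ^ n)"
    unfolding Rest_def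
  proof (rule norm_det_sum_nonid_le[OF \<epsilon>(1)])
    fix i j assume ij: "i < n" "j < n"
    show "cmod (?E $$ (i,j)) \<le> 1 + \<epsilon>"
      using norm_triangle_ineq[of "if i = j then 1 else 0" "complex_of_real d * C $$ (i,j)"] dC[OF ij] \<epsilon>(1)
      unfolding E_index[OF ij] by (auto split: if_splits)
    show "i \<noteq> j \<Longrightarrow> cmod (?E $$ (i,j)) \<le> \<epsilon>"
      using dC[OF ij] unfolding E_index[OF ij] by simp
  qed
  also have "\<dots> \<le> fact n * (d^2 * \<gamma>^2 * (1 + \<gamma>) ^ n)"
  proof -
    have "(1 + \<epsilon>) ^ n \<le> (1 + \<gamma>) ^ n" using \<epsilon> by (intro power_mono) auto
    then show ?thesis
      using \<epsilon> by (intro mult_left_mono) (auto simp: mult_left_mono)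
  qed
  finally show ?thesis
    using D norm_triangle_ineq[of "D - 1 - complex_of_real d * mtrace C" Rest] unfolding det
    by (simp add: algebra_simps)
qed

section \<open>A projected gradient step\<close>

lemma clip_mult_nonneg:
  fixes lo hi t :: real
  assumes "lo \<le> 0" "0 \<le> hi"
  shows "0 \<le> (t - max lo (min hi t)) * max lo (min hi t)"
  using assms by (cases "t \<le> lo"; cases "t \<le> hi") (auto simp: mult_nonneg_nonneg mult_nonpos_nonpos)

lemma abs_clip_le_scaled:
  fixes lo hi t L :: real
  assumes "lo \<le> 0" "0 \<le> hi" "1 \<le> L"
  shows "\<bar>max lo (min hi t)\<bar> \<le> L * \<bar>max lo (min hi (t / L))\<bar>"
proof (cases "0 \<le> t")
  case True
  then have "0 \<le> t / L" using assms by simp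
  then have "max lo (min hi (t / L)) = min hi (t / L)" "0 \<le> min hi (t / L)"
    using assms by (auto simp: max_def)
  then have "L * \<bar>max lo (min hi (t / L))\<bar> = min (L * hi) t"
    using assms by (simp add: min_mult_distrib_left)
  moreover have "hi \<le> L * hi" using assms by (simp add: mult_le_cancel_right1)
  ultimately show ?thesis using True assms by auto
next
  case False
  then have "t / L \<le> 0" using assms by (simp add: divide_nonpos_pos)
  then have "min hi (t / L) = t / L" "max lo (t / L) \<le> 0"
    using assms by (auto simp: min_def)
  then have "L * \<bar>max lo (min hi (t / L))\<bar> = - max (L * lo) t"
    using assms by (simp add: max_mult_distrib_left)
  moreover have "L * lo \<le> lo" using assms by (simp add: mult_le_cancel_right2)
  ultimately show ?thesis using False assms by auto
qed

text \<open>The minimizer is compared with the clipped gradient step \<open>d\<^sup>* = clip (- g / (\<mu> + 2K))\<close>,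
  at which \<open>p + \<mu>/2 d\<^sup>2\<close> lies below \<open>f - (\<mu> + 2K)/2 d\<^sup>*\<^sup>2\<close>; clipping the unscaled step \<open>-g\<close>
  instead loses at most the factor \<open>\<mu> + 2K \<ge> 1\<close>.\<close>

lemma projected_step_decrease:
  fixes p :: "real \<Rightarrow> real" and \<phi> f g K \<mu> lo hi dbar :: real
  assumes lohi: "lo \<le> 0" "0 \<le> hi" and K: "0 \<le> K" and \<mu>: "1 + 4 * K \<le> \<mu>"
    and \<phi>: "\<phi> \<le> f + g * dbar + K * dbar^2"
    and p: "\<And>d. d \<in> {lo..hi} \<Longrightarrow> \<bar>p d - f - g * d\<bar> \<le> K * d^2"
    and dbar: "dbar \<in> {lo..hi}"
    and min: "\<And>d. d \<in> {lo..hi} \<Longrightarrow> p dbar + \<mu> / 2 * dbar^2 \<le> p d + \<mu> / 2 * d^2"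
  shows "\<phi> \<le> f - (max lo (min hi (- g)))^2 / (2 * (\<mu> + 1 + 4 * K))"
proof -
  define L where "L = \<mu> + 2 * K"
  have L: "1 \<le> L" "L \<le> \<mu> + 1 + 4 * K" unfolding L_def using \<mu> K by auto
  define ds where "ds = max lo (min hi (- g / L))"
  have ds: "ds \<in> {lo..hi}" unfolding ds_def using lohi by auto
  have "\<phi> \<le> p dbar + 2 * K * dbar^2" using \<phi> p[OF dbar] by (simp add: abs_le_iff)
  also have "\<dots> \<le> p dbar + \<mu> / 2 * dbar^2"
    using \<mu> K by (intro add_left_mono mult_right_mono) auto
  also have "\<dots> \<le> p ds + \<mu> / 2 * ds^2" by (rule min[OF ds])
  also have "\<dots> \<le> f + g * ds + L / 2 * ds^2"
    using p[OF ds] unfolding L_def by (simp add: abs_le_iff field_simps)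
  also have "\<dots> \<le> f - L / 2 * ds^2"
  proof -
    have "ds^2 \<le> - g / L * ds"
      using clip_mult_nonneg[OF lohi, of "- g / L"] unfolding ds_def by (simp add: algebra_simps power2_eq_square)
    then have "L * ds^2 \<le> - g * ds"
      using L mult_left_mono[of "ds^2" "- g / L * ds" L] by simp
    then show ?thesis by (simp add: algebra_simps)
  qed
  also have "\<dots> \<le> f - (max lo (min hi (- g)))^2 / (2 * (\<mu> + 1 + 4 * K))"
  proof -
    have "\<bar>max lo (min hi (- g))\<bar> \<le> L * \<bar>ds\<bar>"
      unfolding ds_def by (rule abs_clip_le_scaled[OF lohi L(1)])
    then have "\<bar>max lo (min hi (- g))\<bar>^2 \<le> (L * \<bar>ds\<bar>)^2"
      by (rule power_mono) simp
    then have "(max lo (min hi (- g)))^2 \<le> L^2 * ds^2"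
      by (simp add: power_mult_distrib)
    then have "(max lo (min hi (- g)))^2 / (2 * L) \<le> L / 2 * ds^2"
      using L by (simp add: field_simps power2_eq_square)
    moreover have "(max lo (min hi (- g)))^2 / (2 * (\<mu> + 1 + 4 * K)) \<le> (max lo (min hi (- g)))^2 / (2 * L)"
      using L by (intro divide_left_mono) auto
    ultimately show ?thesis by linarith
  qed
  finally show ?thesis .
qed

lemma proj01_minus_eq: "proj01 (x - g) - x = max (- x) (min (1 - x) (- g))"
  unfolding proj01_def by (auto simp: max_def min_def)

section \<open>The activity detection model\<close>

locale activity_model =
  fixes N L M :: nat and sw2 :: real
    and s hb :: "nat \<Rightarrow> complex vec" and R Rh :: "nat \<Rightarrow> complex mat" and y :: "complex vec"
  assumes L: "0 < L" and sw2: "0 < sw2"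
    and s: "\<And>n. n < N \<Longrightarrow> s n \<in> carrier_vec L"
    and hb: "\<And>n. n < N \<Longrightarrow> hb n \<in> carrier_vec M"
    and Rh: "\<And>n. n < N \<Longrightarrow> Rh n \<in> carrier_mat M (dim_col (Rh n))"
    and R_factor: "\<And>n. n < N \<Longrightarrow> Rh n * mat_adjoint (Rh n) = R n"
    and y: "y \<in> carrier_vec (M * L)"
begin

abbreviation "m \<equiv> M * L"
abbreviation "X k \<equiv> Xm L s Rh k"
abbreviation "S a \<equiv> Sig N L M s R sw2 a"
abbreviation "r a \<equiv> resid N L M s hb y a"
abbreviation "b k \<equiv> bvec s hb k"
abbreviation "rk k \<equiv> dim_col (Rh k)"

definition B :: "nat \<Rightarrow> complex mat" where
  "B k = kron (R k) (outer (s k))"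

definition Sinv :: "(nat \<Rightarrow> real) \<Rightarrow> complex mat" where
  "Sinv a = minv (S a)"

definition G :: "(nat \<Rightarrow> real) \<Rightarrow> nat \<Rightarrow> complex mat" where
  "G a n = mat_adjoint (X n) * Sinv a * X n"

definition Q :: "(nat \<Rightarrow> real) \<Rightarrow> nat \<Rightarrow> real \<Rightarrow> complex mat" where
  "Q a n d = Sinv a * X n * (1\<^sub>m (dim_col (X n)) - complex_of_real d \<cdot>\<^sub>m G a n) * mat_adjoint (X n) * Sinv a"

lemma X_carrier: "k < N \<Longrightarrow> X k \<in> carrier_mat m (rk k)"
  using Rh[of k] unfolding Xm_def kron_def carrier_mat_def by simp

lemma B_eq: "k < N \<Longrightarrow> B k = X k * mat_adjoint (X k)"
  unfolding B_def Xm_def using kron_mult_adjoint[OF Rh s L] R_factor by simp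

lemma B_carrier: "k < N \<Longrightarrow> B k \<in> carrier_mat m m"
  using B_eq X_carrier by (metis mat_adjoint_carrier mult_carrier_mat)

lemma S_carrier [simp]: "S a \<in> carrier_mat m m"
  unfolding Sig_def by simp

lemma dim_S [simp]: "dim_row (S a) = m" "dim_col (S a) = m"
  unfolding Sig_def by simp_all

lemma b_carrier [simp]: "k < N \<Longrightarrow> b k \<in> carrier_vec m"
  using hb[of k] s[of k] unfolding bvec_def kron_vec_def by (simp add: mult.commute)

lemma r_carrier [simp]: "r a \<in> carrier_vec m"
  unfolding resid_def ybar_def using y by simp

lemma dim_r [simp]: "dim_vec (r a) = m"
  using r_carrier by simp

lemma S_index: "i < m \<Longrightarrow> j < m \<Longrightarrow>
    S a $$ (i,j) = (\<Sum>k<N. complex_of_real (a k) * B k $$ (i,j)) + (if i = j then complex_of_real sw2 else 0)"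
  unfolding Sig_def B_def by simp

lemma sum_update:
  fixes F :: "nat \<Rightarrow> complex"
  assumes "n < N"
  shows "(\<Sum>k<N. complex_of_real (if k = n then a n + d else a k) * F k)
       = (\<Sum>k<N. complex_of_real (a k) * F k) + complex_of_real d * F n"
proof -
  have "(\<Sum>k<N. complex_of_real (if k = n then a n + d else a k) * F k)
      = (\<Sum>k<N. complex_of_real (a k) * F k + (if k = n then complex_of_real d * F n else 0))"
    by (intro sum.cong) (auto simp: distrib_right)
  then show ?thesis
    using assms by (simp add: sum.distrib)
qed

lemma S_update:
  assumes n: "n < N"
  shows "S (a(n := a n + d)) = S a + complex_of_real d \<cdot>\<^sub>m B n"
proof (rule eq_matI)
  fix i j assume "i < dim_row (S a + complex_of_real d \<cdot>\<^sub>m B n)" "j < dim_col (S a + complex_of_real d \<cdot>\<^sub>m B n)"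
  then show "S (a(n := a n + d)) $$ (i,j) = (S a + complex_of_real d \<cdot>\<^sub>m B n) $$ (i,j)"
    using sum_update[OF n, of a d "\<lambda>k. B k $$ (i,j)"] B_carrier[OF n] by (simp add: S_index)
qed (use B_carrier[OF n] in auto)

lemma r_update:
  assumes n: "n < N"
  shows "r (a(n := a n + d)) = r a - complex_of_real d \<cdot>\<^sub>v b n"
proof (rule eq_vecI)
  fix i assume "i < dim_vec (r a - complex_of_real d \<cdot>\<^sub>v b n)"
  then have "i < m" using b_carrier[OF n] by simp
  then show "r (a(n := a n + d)) $ i = (r a - complex_of_real d \<cdot>\<^sub>v b n) $ i"
    using sum_update[OF n, of a d "\<lambda>k. b k $ i"] y carrier_vecD[OF b_carrier[OF n]]
    by (simp add: resid_def ybar_def)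
qed (use b_carrier[OF n] in simp)

lemma B_hermitian: "k < N \<Longrightarrow> mat_adjoint (B k) = B k"
  using mat_adjoint_mult[OF X_carrier mat_adjoint_carrier[OF X_carrier]] B_eq by simp

lemma S_hermitian: "mat_adjoint (S a) = S a"
proof (rule eq_matI)
  fix i j assume "i < dim_row (S a)" "j < dim_col (S a)"
  then have ij: "i < m" "j < m" by simp_all
  have "cnj (B k $$ (j,i)) = B k $$ (i,j)" if k: "k < N" for k
  proof -
    have "cnj (B k $$ (j,i)) = mat_adjoint (B k) $$ (i,j)"
      using ij B_carrier[OF k] by simp
    then show ?thesis using B_hermitian[OF k] by simp
  qed
  then show "mat_adjoint (S a) $$ (i,j) = S a $$ (i,j)"
    using ij by (simp add: S_index)
qed auto

lemma hform_S:
  assumes v: "v \<in> carrier_vec m"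
  shows "hform v (S a) v = (\<Sum>k<N. complex_of_real (a k) * hform v (B k) v) + complex_of_real (sw2 * vnorm2 v)"
proof -
  let ?F = "\<lambda>i j k. complex_of_real (a k) * (cnj (v $ i) * B k $$ (i,j) * v $ j)"
  have "hform v (S a) v = (\<Sum>i<m. \<Sum>j<m. (\<Sum>k<N. ?F i j k) + (if i = j then complex_of_real sw2 * (cnj (v $ i) * v $ i) else 0))"
    unfolding hform_double_sum[OF S_carrier v v]
    by (intro sum.cong refl) (auto simp: S_index distrib_left distrib_right sum_distrib_left sum_distrib_right mult_ac)
  also have "\<dots> = (\<Sum>i<m. \<Sum>j<m. \<Sum>k<N. ?F i j k) + (\<Sum>i<m. complex_of_real sw2 * (cnj (v $ i) * v $ i))"
    by (simp add: sum.distrib)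
  also have "(\<Sum>i<m. \<Sum>j<m. \<Sum>k<N. ?F i j k) = (\<Sum>k<N. complex_of_real (a k) * hform v (B k) v)"
    by (subst sum.swap, subst (2) sum.swap)
      (simp add: hform_double_sum[OF B_carrier v v] sum_distrib_left mult.assoc)
  also have "(\<Sum>i<m. complex_of_real sw2 * (cnj (v $ i) * v $ i)) = complex_of_real (sw2 * vnorm2 v)"
    using conjugate_scalar_prod_self[of v] v
    by (simp add: scalar_prod_def lessThan_atLeast0 flip: sum_distrib_left)
  finally show ?thesis .
qed

lemma S_coercive:
  assumes "\<And>k. k < N \<Longrightarrow> 0 \<le> a k"
  shows "coercive sw2 m (S a)"
  unfolding coercive_def
proof (intro conjI ballI S_carrier)
  fix v :: "complex vec" assume v: "v \<in> carrier_vec m"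
  have "Re (hform v (S a) v) = (\<Sum>k<N. a k * vnorm2 (mat_adjoint (X k) *\<^sub>v v)) + sw2 * vnorm2 v"
    unfolding hform_S[OF v] by (simp add: B_eq hform_mult_adjoint_self[OF X_carrier v])
  moreover have "0 \<le> (\<Sum>k<N. a k * vnorm2 (mat_adjoint (X k) *\<^sub>v v))"
    using assms by (intro sum_nonneg mult_nonneg_nonneg vnorm2_nonneg) auto
  ultimately show "sw2 * vnorm2 v \<le> Re (hform v (S a) v)" by simp
qed

lemma in_box_update: "in_box N a \<Longrightarrow> 0 \<le> a n + d \<Longrightarrow> a n + d \<le> 1 \<Longrightarrow> in_box N (a(n := a n + d))"
  unfolding in_box_def by auto

lemma in_box_coercive: "in_box N a \<Longrightarrow> coercive sw2 m (S a)"
  unfolding in_box_def by (rule S_coercive) auto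

lemma Sinv_carrier [simp]: "in_box N a \<Longrightarrow> Sinv a \<in> carrier_mat m m"
  unfolding Sinv_def by (rule coercive_minv(1)[OF in_box_coercive sw2])

lemma S_mult_Sinv: "in_box N a \<Longrightarrow> S a * Sinv a = 1\<^sub>m m"
  unfolding Sinv_def by (rule coercive_minv(2)[OF in_box_coercive sw2])

lemma Sinv_hermitian: "in_box N a \<Longrightarrow> mat_adjoint (Sinv a) = Sinv a"
  unfolding Sinv_def by (rule hermitian_minv[OF in_box_coercive sw2 S_hermitian])

lemma op_bounded_Sinv: "in_box N a \<Longrightarrow> op_bounded (1 / sw2^2) (Sinv a)"
  unfolding Sinv_def by (rule op_bounded_minv[OF in_box_coercive sw2])

lemma Sinv_update:
  assumes n: "n < N" and a: "in_box N a" and a': "in_box N (a(n := a n + d))"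
  shows "Sinv (a(n := a n + d)) = Sinv a - complex_of_real d \<cdot>\<^sub>m (Sinv (a(n := a n + d)) * B n * Sinv a)"
proof -
  have E: "complex_of_real d \<cdot>\<^sub>m B n \<in> carrier_mat m m" using B_carrier[OF n] by simp
  have "Sinv (a(n := a n + d)) = Sinv a - Sinv (a(n := a n + d)) * (complex_of_real d \<cdot>\<^sub>m B n) * Sinv a"
    using minv_add_eq[OF in_box_coercive[OF a] _ E sw2] in_box_coercive[OF a']
    unfolding Sinv_def S_update[OF n] by simp
  also have "Sinv (a(n := a n + d)) * (complex_of_real d \<cdot>\<^sub>m B n) * Sinv a
      = complex_of_real d \<cdot>\<^sub>m (Sinv (a(n := a n + d)) * B n * Sinv a)"
    using Sinv_carrier[OF a] Sinv_carrier[OF a'] B_carrier[OF n]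
    by (simp add: mult_smult_distrib[of _ m m] mult_smult_assoc_mat[of _ m m])
  finally show ?thesis .
qed

lemma in_box_step_abs_le_1:
  "in_box N a \<Longrightarrow> n < N \<Longrightarrow> 0 \<le> a n + d \<Longrightarrow> a n + d \<le> 1 \<Longrightarrow> \<bar>d\<bar> \<le> 1"
  unfolding in_box_def by (drule spec[of _ n]) auto

lemma S_update_factor:
  assumes n: "n < N" and a: "in_box N a"
  shows "S (a(n := a n + d)) = S a * (1\<^sub>m m + complex_of_real d \<cdot>\<^sub>m (Sinv a * B n))"
proof -
  have Bn: "B n \<in> carrier_mat m m" by (rule B_carrier[OF n])
  have C: "Sinv a * B n \<in> carrier_mat m m" using mult_carrier_mat[OF Sinv_carrier[OF a] Bn] .
  have "S a * (1\<^sub>m m + complex_of_real d \<cdot>\<^sub>m (Sinv a * B n))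
      = S a + complex_of_real d \<cdot>\<^sub>m (S a * (Sinv a * B n))"
    using mult_add_distrib_mat[OF S_carrier one_carrier_mat smult_carrier_mat[OF C]]
      mult_smult_distrib[OF S_carrier C] by simp
  also have "S a * (Sinv a * B n) = B n"
    using assoc_mult_mat[OF S_carrier Sinv_carrier[OF a] Bn, symmetric] S_mult_Sinv[OF a] Bn by simp
  finally show ?thesis unfolding S_update[OF n] ..
qed

lemma mtrace_Sinv_B:
  assumes n: "n < N" and a: "in_box N a"
  shows "mtrace (Sinv a * B n) = mtrace (G a n)"
proof -
  have X: "X n \<in> carrier_mat m (rk n)" by (rule X_carrier[OF n])
  have P: "Sinv a \<in> carrier_mat m m" using a by simp
  have "Sinv a * B n = (Sinv a * X n) * mat_adjoint (X n)"
    unfolding B_eq[OF n] using assoc_mult_mat[OF P X mat_adjoint_carrier[OF X]] by simp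
  also have "mtrace \<dots> = mtrace (mat_adjoint (X n) * (Sinv a * X n))"
    using P X by (intro mtrace_mult_comm) auto
  also have "mat_adjoint (X n) * (Sinv a * X n) = G a n"
    unfolding G_def using assoc_mult_mat[OF mat_adjoint_carrier[OF X] P X] by simp
  finally show ?thesis .
qed

text \<open>\<open>\<Sigma>\<^sub>a\<^sub>' = \<Sigma>\<^sub>a (I + d \<Sigma>\<^sub>a\<^sup>-\<^sup>1 B\<^sub>n)\<close>, and \<open>ln t \<le> t - 1\<close> reduces the claim to the expansion of
  \<open>det (I + d C)\<close>, whose entries are bounded uniformly in \<open>a\<close> since \<open>\<Sigma>\<^sub>a\<^sup>-\<^sup>1\<close> is.\<close>

lemma logdet_update_le:
  assumes n: "n < N"
  shows "\<exists>K. \<forall>a d. in_box N a \<longrightarrow> 0 \<le> a n + d \<longrightarrow> a n + d \<le> 1 \<longrightarrow>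
    ln (Re (det (S (a(n := a n + d))))) \<le> ln (Re (det (S a))) + d * Re (mtrace (G a n)) + K * d^2"
proof -
  define \<gamma> where "\<gamma> = sqrt (1 / sw2^2 * fro (B n))"
  show ?thesis
  proof (intro exI[of _ "\<gamma>^2 * (m^2 + fact m) * (1 + \<gamma>) ^ m"] allI impI)
    fix a d assume a: "in_box N a" and ad: "0 \<le> a n + d" "a n + d \<le> 1"
    define a' where "a' = a(n := a n + d)"
    have a': "in_box N a'" unfolding a'_def by (rule in_box_update[OF a ad])
    define C where "C = Sinv a * B n"
    have C: "C \<in> carrier_mat m m" unfolding C_def using mult_carrier_mat[OF Sinv_carrier[OF a] B_carrier[OF n]] .
    have C_entry: "cmod (C $$ (i,j)) \<le> \<gamma>" if "i < m" "j < m" for i j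
      unfolding C_def \<gamma>_def using that sw2 B_carrier[OF n] a
      by (intro real_le_rsqrt mult_mat_entry_squared_le[OF _ _ op_bounded_Sinv]) auto
    define D where "D = det (1\<^sub>m m + complex_of_real d \<cdot>\<^sub>m C)"
    have det_S': "det (S a') = det (S a) * D"
      unfolding a'_def S_update_factor[OF n a] D_def C_def using C_def C by (intro det_mult) auto
    have S: "0 < Re (det (S a))" "Im (det (S a)) = 0"
      using coercive_hermitian_det_pos[OF in_box_coercive[OF a] sw2 S_hermitian] by auto
    have S': "0 < Re (det (S a'))"
      using coercive_hermitian_det_pos[OF in_box_coercive[OF a'] sw2 S_hermitian] by auto
    have Re_S': "Re (det (S a')) = Re (det (S a)) * Re D"
      unfolding det_S' using S by simp
    then have D: "0 < Re D" using S S' by (simp add: zero_less_mult_iff)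
    have "ln (Re (det (S a'))) = ln (Re (det (S a))) + ln (Re D)"
      unfolding Re_S' using S D by (simp add: ln_mult)
    also have "ln (Re D) \<le> Re D - 1" using D by (rule ln_le_minus_one)
    also have "Re D - 1 = Re (D - 1 - complex_of_real d * mtrace C) + d * Re (mtrace C)"
      by simp
    also have "Re (D - 1 - complex_of_real d * mtrace C) \<le> cmod (D - 1 - complex_of_real d * mtrace C)"
      by (rule complex_Re_le_cmod)
    also have "\<dots> \<le> d^2 * (\<gamma>^2 * (m^2 + fact m) * (1 + \<gamma>) ^ m)"
      unfolding D_def using C C_entry in_box_step_abs_le_1[OF a n ad]
      by (intro det_one_plus_smult_expansion) (auto simp: \<gamma>_def fro_nonneg)
    finally have "ln (Re (det (S a'))) \<le> ln (Re (det (S a)))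
        + (d^2 * (\<gamma>^2 * (m^2 + fact m) * (1 + \<gamma>) ^ m) + d * Re (mtrace C))" by simp
    then show "ln (Re (det (S (a(n := a n + d))))) \<le> ln (Re (det (S a))) + d * Re (mtrace (G a n))
        + \<gamma>^2 * (m^2 + fact m) * (1 + \<gamma>) ^ m * d^2"
      unfolding a'_def[symmetric] C_def mtrace_Sinv_B[OF n a] by (simp add: algebra_simps)
  qed
qed

lemma residual_bounded: "\<exists>\<rho>\<ge>0. \<forall>a. in_box N a \<longrightarrow> vnorm2 (r a) \<le> \<rho>"
proof (intro exI conjI allI impI)
  let ?\<rho> = "\<Sum>i<m. (cmod (y $ i) + (\<Sum>k<N. cmod (b k $ i)))^2"
  show "0 \<le> ?\<rho>" by (intro sum_nonneg) simp
  fix a assume a: "in_box N a"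
  have "vnorm2 (r a) = (\<Sum>i<m. (cmod (r a $ i))^2)"
    unfolding vnorm2_def by simp
  also have "\<dots> \<le> ?\<rho>"
  proof (intro sum_mono power_mono)
    fix i assume "i \<in> {..<m}"
    then have "r a $ i = y $ i - (\<Sum>k<N. complex_of_real (a k) * b k $ i)"
      unfolding resid_def ybar_def using y by simp
    also have "cmod \<dots> \<le> cmod (y $ i) + (\<Sum>k<N. cmod (complex_of_real (a k) * b k $ i))"
      by (rule order_trans[OF norm_triangle_ineq4 add_left_mono[OF norm_sum]])
    also have "\<dots> \<le> cmod (y $ i) + (\<Sum>k<N. cmod (b k $ i))"
      using a unfolding in_box_def by (intro add_left_mono sum_mono) (simp add: norm_mult mult_left_le_one_le)
    finally show "cmod (r a $ i) \<le> cmod (y $ i) + (\<Sum>k<N. cmod (b k $ i))" .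
  qed simp
  finally show "vnorm2 (r a) \<le> ?\<rho>" .
qed

lemma hform_Sinv_B_Sinv:
  assumes n: "n < N" and a: "in_box N a" and v: "v \<in> carrier_vec m"
  shows "hform v (Sinv a * B n * Sinv a) v = complex_of_real (vnorm2 ((mat_adjoint (X n) * Sinv a) *\<^sub>v v))"
proof -
  have X: "X n \<in> carrier_mat m (rk n)" by (rule X_carrier[OF n])
  have P: "Sinv a \<in> carrier_mat m m" using a by simp
  have U: "Sinv a * X n \<in> carrier_mat m (rk n)" using P X by simp
  have U_adj: "mat_adjoint (Sinv a * X n) = mat_adjoint (X n) * Sinv a"
    using mat_adjoint_mult[OF P X] Sinv_hermitian[OF a] by simp
  have XH: "mat_adjoint (X n) \<in> carrier_mat (rk n) m" using X by simp
  have "Sinv a * B n * Sinv a = (Sinv a * X n * mat_adjoint (X n)) * Sinv a"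
    unfolding B_eq[OF n] using assoc_mult_mat[OF P X XH] by simp
  also have "\<dots> = (Sinv a * X n) * mat_adjoint (Sinv a * X n)"
    unfolding U_adj using assoc_mult_mat[OF U XH P] .
  finally show ?thesis
    unfolding U_adj[symmetric] by (simp add: hform_mult_adjoint_self[OF U v])
qed

(* From r' = r - d b and the resolvent identity \<Sigma>'^-1 = \<Sigma>^-1 - d T with T = \<Sigma>'^-1 B_n \<Sigma>^-1, used once
   more inside the first-order term T = \<Sigma>^-1 B_n \<Sigma>^-1 - d T B_n \<Sigma>^-1. *)

lemma hform_resid_update:
  assumes n: "n < N" and a: "in_box N a" and a': "in_box N (a(n := a n + d))"
  defines "D \<equiv> complex_of_real d" and "P \<equiv> Sinv a" and "P' \<equiv> Sinv (a(n := a n + d))"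
    and "T \<equiv> Sinv (a(n := a n + d)) * B n * Sinv a"
  shows "hform (r (a(n := a n + d))) P' (r (a(n := a n + d)))
    = hform (r a) P (r a) - D * hform (r a) (P * B n * P) (r a) - D * (hform (r a) P (b n) + hform (b n) P (r a))
      + D^2 * (hform (r a) (T * B n * P) (r a) + hform (r a) T (b n) + hform (b n) T (r a) + hform (b n) P (b n))
      - D^3 * hform (b n) T (b n)"
proof -
  have Bn: "B n \<in> carrier_mat m m" by (rule B_carrier[OF n])
  have P: "P \<in> carrier_mat m m" and P': "P' \<in> carrier_mat m m"
    unfolding P_def P'_def using a a' by auto
  have T: "T \<in> carrier_mat m m"
    unfolding T_def P'_def[symmetric] P_def[symmetric] using P P' Bn by (metis mult_carrier_mat)
  have r: "r a \<in> carrier_vec m" and bn: "b n \<in> carrier_vec m" using n by auto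
  have P'_eq: "P' = P - D \<cdot>\<^sub>m T"
    unfolding P'_def P_def T_def D_def by (rule Sinv_update[OF n a a'])
  have T_eq: "T = P * B n * P - D \<cdot>\<^sub>m (T * B n * P)"
  proof -
    have "T = P' * B n * P"
      unfolding T_def P'_def P_def ..
    also have "\<dots> = (P - D \<cdot>\<^sub>m T) * B n * P"
      unfolding P'_eq ..
    also have "\<dots> = P * B n * P - D \<cdot>\<^sub>m (T * B n * P)"
      using P T Bn by (simp add: minus_mult_distrib_mat[of _ m m] mult_smult_assoc_mat[of _ m m])
    finally show ?thesis .
  qed
  have P'_form: "hform x P' z = hform x P z - D * hform x T z" if "x \<in> carrier_vec m" "z \<in> carrier_vec m" for x z
    unfolding P'_eq using P T that by (rule hform_diff_smult_mat)
  have T_form: "hform (r a) T (r a) = hform (r a) (P * B n * P) (r a) - D * hform (r a) (T * B n * P) (r a)"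
    by (subst T_eq) (use P T Bn r in \<open>simp add: hform_diff_smult_mat[of _ m]\<close>)
  have "hform (r (a(n := a n + d))) P' (r (a(n := a n + d)))
      = hform (r a) P' (r a) - D * hform (b n) P' (r a) - D * (hform (r a) P' (b n) - D * hform (b n) P' (b n))"
    unfolding r_update[OF n] D_def using P' r bn
    by (simp add: hform_diff_smult_left[of _ m] hform_diff_smult_right[of _ m])
  then show ?thesis
    using r bn by (simp add: P'_form T_form algebra_simps power2_eq_square power3_eq_cube)
qed

lemma abs_cubic_remainder_le:
  fixes d :: real and w z :: complex
  assumes "\<bar>d\<bar> \<le> 1"
  shows "\<bar>d^2 * Re w - d^3 * Re z\<bar> \<le> d^2 * (cmod w + cmod z)"
proof -
  have "\<bar>d^2 * Re w\<bar> \<le> d^2 * cmod w"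
    by (simp add: abs_mult mult_left_mono abs_Re_le_cmod)
  moreover have "\<bar>d^3 * Re z\<bar> \<le> d^2 * cmod z"
  proof -
    have "\<bar>d\<bar> * \<bar>Re z\<bar> \<le> 1 * cmod z"
      using assms abs_Re_le_cmod[of z] by (intro mult_mono) auto
    then have "d^2 * (\<bar>d\<bar> * \<bar>Re z\<bar>) \<le> d^2 * cmod z" by (simp add: mult_left_mono)
    moreover have "\<bar>d^3 * Re z\<bar> = d^2 * (\<bar>d\<bar> * \<bar>Re z\<bar>)"
      by (simp add: abs_mult power3_eq_cube power2_eq_square)
    ultimately show ?thesis by linarith
  qed
  ultimately show ?thesis by (simp add: algebra_simps)
qed

lemma uniformly_op_bounded_Sinv_B_Sinv:
  assumes n: "n < N"
  shows "\<exists>c\<ge>0. \<forall>a a'. in_box N a \<longrightarrow> in_box N a' \<longrightarrow> op_bounded c (Sinv a' * B n * Sinv a)"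
proof (intro exI[of _ "1 / sw2^2 * fro (B n) * (1 / sw2^2)"] conjI allI impI)
  show "0 \<le> 1 / sw2^2 * fro (B n) * (1 / sw2^2)" by (simp add: fro_nonneg)
  fix a a' assume a: "in_box N a" and a': "in_box N a'"
  have "op_bounded (1 / sw2^2 * fro (B n)) (Sinv a' * B n)"
    by (rule op_bounded_mult[OF Sinv_carrier[OF a'] B_carrier[OF n] op_bounded_Sinv[OF a'] op_bounded_fro]) simp
  then show "op_bounded (1 / sw2^2 * fro (B n) * (1 / sw2^2)) (Sinv a' * B n * Sinv a)"
    using Sinv_carrier[OF a'] B_carrier[OF n] fro_nonneg[of "B n"]
    by (intro op_bounded_mult[OF _ Sinv_carrier[OF a] _ op_bounded_Sinv[OF a]]) auto
qed

lemma quad_form_update_le: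
  assumes n: "n < N"
  shows "\<exists>K. \<forall>a d. in_box N a \<longrightarrow> 0 \<le> a n + d \<longrightarrow> a n + d \<le> 1 \<longrightarrow>
    Re (hform (r (a(n := a n + d))) (Sinv (a(n := a n + d))) (r (a(n := a n + d))))
      \<le> Re (hform (r a) (Sinv a) (r a)) - d * vnorm2 ((mat_adjoint (X n) * Sinv a) *\<^sub>v r a)
        - 2 * d * Re (hform (r a) (Sinv a) (b n)) + K * d^2"
proof -
  obtain \<rho> where \<rho>: "0 \<le> \<rho>" "\<And>a. in_box N a \<Longrightarrow> vnorm2 (r a) \<le> \<rho>"
    using residual_bounded by blast
  obtain \<kappa> where \<kappa>: "0 \<le> \<kappa>" "\<And>a a'. in_box N a \<Longrightarrow> in_box N a' \<Longrightarrow> op_bounded \<kappa> (Sinv a' * B n * Sinv a)"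
    using uniformly_op_bounded_Sinv_B_Sinv[OF n] by blast
  define c where "c = 1 / sw2^2"
  define \<nu> where "\<nu> = vnorm2 (b n)"
  define \<kappa>' where "\<kappa>' = \<kappa> * fro (B n) * c"
  have c: "0 \<le> c" and \<kappa>': "0 \<le> \<kappa>'" and \<nu>: "0 \<le> \<nu>"
    unfolding c_def \<kappa>'_def \<nu>_def using \<kappa>(1) by (auto simp: fro_nonneg vnorm2_nonneg)
  define K where "K = (1 + \<rho> * (\<kappa>' * \<rho>)) + (1 + \<rho> * (\<kappa> * \<nu>)) + (1 + \<nu> * (\<kappa> * \<rho>)) + (1 + \<nu> * (c * \<nu>))
    + (1 + \<nu> * (\<kappa> * \<nu>))"
  show ?thesis
  proof (intro exI[of _ K] allI impI)
    fix a d assume a: "in_box N a" and ad: "0 \<le> a n + d" "a n + d \<le> 1"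
    have a': "in_box N (a(n := a n + d))" by (rule in_box_update[OF a ad])
    have d: "\<bar>d\<bar> \<le> 1" by (rule in_box_step_abs_le_1[OF a n ad])
    define P where "P = Sinv a"
    define T where "T = Sinv (a(n := a n + d)) * B n * Sinv a"
    have Bn: "B n \<in> carrier_mat m m" and P: "P \<in> carrier_mat m m" and opP: "op_bounded c P"
      unfolding P_def c_def using B_carrier[OF n] a op_bounded_Sinv by auto
    have T: "T \<in> carrier_mat m m" and opT: "op_bounded \<kappa> T"
      unfolding T_def using Sinv_carrier[OF a] Sinv_carrier[OF a'] Bn \<kappa>(2)[OF a a'] by auto
    have W: "T * B n * P \<in> carrier_mat m m" using T Bn P by simp
    have "op_bounded (\<kappa> * fro (B n)) (T * B n)"
      by (rule op_bounded_mult[OF T Bn opT op_bounded_fro \<kappa>(1)])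
    then have opW: "op_bounded \<kappa>' (T * B n * P)"
      unfolding \<kappa>'_def using \<kappa>(1) fro_nonneg[of "B n"]
      by (intro op_bounded_mult[OF mult_carrier_mat[OF T Bn] P _ opP]) auto
    have r: "r a \<in> carrier_vec m" "vnorm2 (r a) \<le> \<rho>" and bn: "b n \<in> carrier_vec m" "vnorm2 (b n) \<le> \<nu>"
      using n \<rho>(2)[OF a] unfolding \<nu>_def by auto
    let ?R = "hform (r a) (T * B n * P) (r a) + hform (r a) T (b n) + hform (b n) T (r a) + hform (b n) P (b n)"
    have "cmod ?R \<le> cmod (hform (r a) (T * B n * P) (r a)) + cmod (hform (r a) T (b n))
        + cmod (hform (b n) T (r a)) + cmod (hform (b n) P (b n))"
      by (intro order_trans[OF norm_triangle_ineq] add_mono order_refl)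
    then have "cmod ?R + cmod (hform (b n) T (b n)) \<le> K"
      using cmod_hform_le[OF W opW \<kappa>' r r] cmod_hform_le[OF T opT \<kappa>(1) r bn] cmod_hform_le[OF T opT \<kappa>(1) bn r]
        cmod_hform_le[OF P opP c bn bn] cmod_hform_le[OF T opT \<kappa>(1) bn bn]
      unfolding K_def by linarith
    then have "d^2 * (cmod ?R + cmod (hform (b n) T (b n))) \<le> K * d^2"
      by (metis mult.commute mult_left_mono zero_le_power2)
    then have rem: "d^2 * Re ?R - d^3 * Re (hform (b n) T (b n)) \<le> K * d^2"
      using abs_cubic_remainder_le[OF d, of ?R "hform (b n) T (b n)"] by linarith
    have "hform (b n) P (r a) = cnj (hform (r a) P (b n))"
      unfolding P_def using Sinv_hermitian[OF a] a r bn by (intro hform_hermitian_swap) auto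
    then have "hform (r (a(n := a n + d))) (Sinv (a(n := a n + d))) (r (a(n := a n + d)))
      = hform (r a) P (r a) - complex_of_real d * complex_of_real (vnorm2 ((mat_adjoint (X n) * Sinv a) *\<^sub>v r a))
        - complex_of_real d * (hform (r a) P (b n) + cnj (hform (r a) P (b n)))
        + (complex_of_real d)^2 * ?R - (complex_of_real d)^3 * hform (b n) T (b n)"
      using hform_resid_update[OF n a a'] hform_Sinv_B_Sinv[OF n a r(1)] unfolding P_def T_def by simp
    from arg_cong[OF this, of Re]
    have "Re (hform (r (a(n := a n + d))) (Sinv (a(n := a n + d))) (r (a(n := a n + d))))
      = Re (hform (r a) (Sinv a) (r a)) - d * vnorm2 ((mat_adjoint (X n) * Sinv a) *\<^sub>v r a)
        - 2 * d * Re (hform (r a) (Sinv a) (b n)) + (d^2 * Re ?R - d^3 * Re (hform (b n) T (b n)))"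
      unfolding P_def by simp
    then show "Re (hform (r (a(n := a n + d))) (Sinv (a(n := a n + d))) (r (a(n := a n + d))))
      \<le> Re (hform (r a) (Sinv a) (r a)) - d * vnorm2 ((mat_adjoint (X n) * Sinv a) *\<^sub>v r a)
        - 2 * d * Re (hform (r a) (Sinv a) (b n)) + K * d^2"
      using rem by linarith
  qed
qed

abbreviation "f a \<equiv> fobj N L M s hb R sw2 y a"
abbreviation "g a n \<equiv> gradf N L M s hb R Rh sw2 y a n"

lemma fobj_eq: "f a = ln (Re (det (S a))) + Re (hform (r a) (Sinv a) (r a))"
  unfolding fobj_def Sinv_def ..

lemma gradf_eq: "g a n = Re (mtrace (G a n)) - vnorm2 ((mat_adjoint (X n) * Sinv a) *\<^sub>v r a)
    - 2 * Re (hform (r a) (Sinv a) (b n))"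
  unfolding gradf_def Let_def Sinv_def G_def ..

lemma p_approx_eq:
  "p_approx N L M s hb R Rh sw2 y a n d = f a + d * Re (mtrace (G a n))
    - 2 * d * Re (hform (r a) (Sinv a) (b n)) + d^2 * Re (hform (b n) (Sinv a) (b n))
    - d * Re (hform (r a) (Q a n d) (r a)) + 2 * d^2 * Re (hform (r a) (Q a n d) (b n))
    - d^3 * Re (hform (b n) (Q a n d) (b n))"
  unfolding p_approx_def Let_def Sinv_def[symmetric] G_def[symmetric] Q_def ..

lemma Q_split:
  assumes n: "n < N" and a: "in_box N a"
  shows "Q a n d = Sinv a * B n * Sinv a - complex_of_real d \<cdot>\<^sub>m (Sinv a * X n * G a n * mat_adjoint (X n) * Sinv a)"
proof -
  let ?D = "complex_of_real d"
  have X: "X n \<in> carrier_mat m (rk n)" by (rule X_carrier[OF n])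
  have XH: "mat_adjoint (X n) \<in> carrier_mat (rk n) m" using X by simp
  have P: "Sinv a \<in> carrier_mat m m" using a by simp
  have U: "Sinv a * X n \<in> carrier_mat m (rk n)" using P X by simp
  have Gn: "G a n \<in> carrier_mat (rk n) (rk n)" unfolding G_def using XH P X by (meson mult_carrier_mat)
  have UG: "Sinv a * X n * G a n \<in> carrier_mat m (rk n)" using U Gn by simp
  have "Sinv a * X n * (1\<^sub>m (rk n) - ?D \<cdot>\<^sub>m G a n) = Sinv a * X n - ?D \<cdot>\<^sub>m (Sinv a * X n * G a n)"
    using mult_minus_distrib_mat[OF U one_carrier_mat smult_carrier_mat[OF Gn]] mult_smult_distrib[OF U Gn]
      right_mult_one_mat[OF U] by simp
  then have "Q a n d = (Sinv a * X n - ?D \<cdot>\<^sub>m (Sinv a * X n * G a n)) * mat_adjoint (X n) * Sinv a"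
    unfolding Q_def using X by simp
  also have "\<dots> = Sinv a * X n * mat_adjoint (X n) * Sinv a - ?D \<cdot>\<^sub>m (Sinv a * X n * G a n * mat_adjoint (X n) * Sinv a)"
    using U UG XH P
    by (simp add: minus_mult_distrib_mat[of _ m "rk n"] minus_mult_distrib_mat[of _ m m] mult_smult_assoc_mat[of _ m "rk n"]
        mult_smult_assoc_mat[of _ m m])
  also have "Sinv a * X n * mat_adjoint (X n) = Sinv a * B n"
    unfolding B_eq[OF n] using assoc_mult_mat[OF P X XH] .
  finally show ?thesis .
qed

lemma hform_Q:
  assumes n: "n < N" and a: "in_box N a" and x: "x \<in> carrier_vec m" and z: "z \<in> carrier_vec m"
  shows "hform x (Q a n d) z = hform x (Sinv a * B n * Sinv a) z
    - complex_of_real d * hform x (Sinv a * X n * G a n * mat_adjoint (X n) * Sinv a) z"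
proof -
  have X: "X n \<in> carrier_mat m (rk n)" by (rule X_carrier[OF n])
  have P: "Sinv a \<in> carrier_mat m m" using a by simp
  have "G a n \<in> carrier_mat (rk n) (rk n)"
    unfolding G_def using X P by (meson mat_adjoint_carrier mult_carrier_mat)
  then have Q\<^sub>1: "Sinv a * X n * G a n * mat_adjoint (X n) * Sinv a \<in> carrier_mat m m"
    using X P by (meson mat_adjoint_carrier mult_carrier_mat)
  have Q\<^sub>0: "Sinv a * B n * Sinv a \<in> carrier_mat m m"
    using P B_carrier[OF n] by (meson mult_carrier_mat)
  show ?thesis
    unfolding Q_split[OF n a] by (rule hform_diff_smult_mat[OF Q\<^sub>0 Q\<^sub>1 x z])
qed

lemma uniformly_op_bounded_Sinv_XGX_Sinv:
  assumes n: "n < N"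
  shows "\<exists>c\<ge>0. \<forall>a. in_box N a \<longrightarrow> op_bounded c (Sinv a * X n * G a n * mat_adjoint (X n) * Sinv a)"
proof -
  define c where "c = 1 / sw2^2"
  define \<xi> where "\<xi> = fro (X n)"
  define \<xi>' where "\<xi>' = fro (mat_adjoint (X n))"
  have c: "0 \<le> c" and \<xi>: "0 \<le> \<xi>" "0 \<le> \<xi>'"
    unfolding c_def \<xi>_def \<xi>'_def by (auto simp: fro_nonneg)
  show ?thesis
  proof (intro exI[of _ "c * \<xi> * (\<xi>' * c * \<xi>) * \<xi>' * c"] conjI allI impI)
    show "0 \<le> c * \<xi> * (\<xi>' * c * \<xi>) * \<xi>' * c" using c \<xi> by simp
    fix a assume a: "in_box N a"
    have X: "X n \<in> carrier_mat m (rk n)" by (rule X_carrier[OF n])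
    have XH: "mat_adjoint (X n) \<in> carrier_mat (rk n) m" using X by simp
    have P: "Sinv a \<in> carrier_mat m m" and opP: "op_bounded c (Sinv a)"
      unfolding c_def using a op_bounded_Sinv by auto
    have Gn: "G a n \<in> carrier_mat (rk n) (rk n)" and opG: "op_bounded (\<xi>' * c * \<xi>) (G a n)"
      unfolding G_def \<xi>_def \<xi>'_def using XH P X fro_nonneg[of "mat_adjoint (X n)"] c
      by (auto intro!: op_bounded_mult[OF _ X] op_bounded_mult[OF XH P] op_bounded_fro opP mult_nonneg_nonneg)
    have "op_bounded (c * \<xi>) (Sinv a * X n)"
      unfolding \<xi>_def by (rule op_bounded_mult[OF P X opP op_bounded_fro c])
    then have "op_bounded (c * \<xi> * (\<xi>' * c * \<xi>)) (Sinv a * X n * G a n)"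
      using c \<xi> by (intro op_bounded_mult[OF _ Gn _ opG]) (use P X in auto)
    then have "op_bounded (c * \<xi> * (\<xi>' * c * \<xi>) * \<xi>') (Sinv a * X n * G a n * mat_adjoint (X n))"
      using c \<xi> Gn P X unfolding \<xi>'_def by (intro op_bounded_mult[OF _ XH _ op_bounded_fro]) auto
    then show "op_bounded (c * \<xi> * (\<xi>' * c * \<xi>) * \<xi>' * c) (Sinv a * X n * G a n * mat_adjoint (X n) * Sinv a)"
      using c \<xi> P X Gn XH by (intro op_bounded_mult[OF _ P _ opP]) auto
  qed
qed

lemma cmod_hform_Q_bounded:
  assumes n: "n < N"
  shows "\<exists>c\<ge>0. \<forall>a (d :: real) x z \<xi> \<zeta>. in_box N a \<longrightarrow> \<bar>d\<bar> \<le> 1 \<longrightarrow> x \<in> carrier_vec m \<longrightarrow> vnorm2 x \<le> \<xi>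
    \<longrightarrow> z \<in> carrier_vec m \<longrightarrow> vnorm2 z \<le> \<zeta> \<longrightarrow> cmod (hform x (Q a n d) z) \<le> 2 + \<xi> * (c * \<zeta>)"
proof -
  obtain \<kappa> where \<kappa>: "0 \<le> \<kappa>" "\<And>a. in_box N a \<Longrightarrow> op_bounded \<kappa> (Sinv a * B n * Sinv a)"
    using uniformly_op_bounded_Sinv_B_Sinv[OF n] by blast
  obtain \<kappa>\<^sub>1 where \<kappa>\<^sub>1: "0 \<le> \<kappa>\<^sub>1" "\<And>a. in_box N a \<Longrightarrow> op_bounded \<kappa>\<^sub>1 (Sinv a * X n * G a n * mat_adjoint (X n) * Sinv a)"
    using uniformly_op_bounded_Sinv_XGX_Sinv[OF n] by blast
  show ?thesis
  proof (intro exI[of _ "\<kappa> + \<kappa>\<^sub>1"] conjI allI impI)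
    show "0 \<le> \<kappa> + \<kappa>\<^sub>1" using \<kappa> \<kappa>\<^sub>1 by simp
    fix a and d :: real and x z \<xi> \<zeta>
    assume a: "in_box N a" and d: "\<bar>d\<bar> \<le> 1" and x: "x \<in> carrier_vec m" "vnorm2 x \<le> \<xi>"
      and z: "z \<in> carrier_vec m" "vnorm2 z \<le> \<zeta>"
    have X: "X n \<in> carrier_mat m (rk n)" by (rule X_carrier[OF n])
    have P: "Sinv a \<in> carrier_mat m m" using a by simp
    have Q\<^sub>0: "Sinv a * B n * Sinv a \<in> carrier_mat m m"
      using P B_carrier[OF n] by (meson mult_carrier_mat)
    have "G a n \<in> carrier_mat (rk n) (rk n)"
      unfolding G_def using X P by (meson mat_adjoint_carrier mult_carrier_mat)
    then have Q\<^sub>1: "Sinv a * X n * G a n * mat_adjoint (X n) * Sinv a \<in> carrier_mat m m"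
      using X P by (meson mat_adjoint_carrier mult_carrier_mat)
    have "cmod (hform x (Q a n d) z) \<le> cmod (hform x (Sinv a * B n * Sinv a) z)
        + cmod (hform x (Sinv a * X n * G a n * mat_adjoint (X n) * Sinv a) z)"
      unfolding hform_Q[OF n a x(1) z(1)] using d
      by (intro order_trans[OF norm_triangle_ineq4] add_left_mono) (simp add: norm_mult mult_left_le_one_le)
    then show "cmod (hform x (Q a n d) z) \<le> 2 + \<xi> * ((\<kappa> + \<kappa>\<^sub>1) * \<zeta>)"
      using cmod_hform_le[OF Q\<^sub>0 \<kappa>(2)[OF a] \<kappa>(1) x z] cmod_hform_le[OF Q\<^sub>1 \<kappa>\<^sub>1(2)[OF a] \<kappa>\<^sub>1(1) x z]
      by (simp add: algebra_simps)
  qed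
qed

lemma p_approx_taylor:
  assumes n: "n < N"
  shows "\<exists>K. \<forall>a d. in_box N a \<longrightarrow> 0 \<le> a n + d \<longrightarrow> a n + d \<le> 1 \<longrightarrow>
    \<bar>p_approx N L M s hb R Rh sw2 y a n d - f a - g a n * d\<bar> \<le> K * d^2"
proof -
  obtain \<rho> where \<rho>: "0 \<le> \<rho>" "\<And>a. in_box N a \<Longrightarrow> vnorm2 (r a) \<le> \<rho>"
    using residual_bounded by blast
  obtain \<kappa>\<^sub>1 where \<kappa>\<^sub>1: "0 \<le> \<kappa>\<^sub>1" "\<And>a. in_box N a \<Longrightarrow> op_bounded \<kappa>\<^sub>1 (Sinv a * X n * G a n * mat_adjoint (X n) * Sinv a)"
    using uniformly_op_bounded_Sinv_XGX_Sinv[OF n] by blast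
  obtain \<kappa>\<^sub>Q where \<kappa>\<^sub>Q: "0 \<le> \<kappa>\<^sub>Q" "\<And>a (d :: real) x z \<xi> \<zeta>. in_box N a \<Longrightarrow> \<bar>d\<bar> \<le> 1 \<Longrightarrow> x \<in> carrier_vec m \<Longrightarrow> vnorm2 x \<le> \<xi>
    \<Longrightarrow> z \<in> carrier_vec m \<Longrightarrow> vnorm2 z \<le> \<zeta> \<Longrightarrow> cmod (hform x (Q a n d) z) \<le> 2 + \<xi> * (\<kappa>\<^sub>Q * \<zeta>)"
    using cmod_hform_Q_bounded[OF n] by blast
  define c where "c = 1 / sw2^2"
  define \<nu> where "\<nu> = vnorm2 (b n)"
  have c: "0 \<le> c" unfolding c_def by simp
  define K where "K = (1 + \<nu> * (c * \<nu>)) + (1 + \<rho> * (\<kappa>\<^sub>1 * \<rho>)) + 2 * (2 + \<rho> * (\<kappa>\<^sub>Q * \<nu>)) + (2 + \<nu> * (\<kappa>\<^sub>Q * \<nu>))"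
  show ?thesis
  proof (intro exI[of _ K] allI impI)
    fix a d assume a: "in_box N a" and ad: "0 \<le> a n + d" "a n + d \<le> 1"
    have d: "\<bar>d\<bar> \<le> 1" by (rule in_box_step_abs_le_1[OF a n ad])
    let ?Q\<^sub>1 = "Sinv a * X n * G a n * mat_adjoint (X n) * Sinv a"
    have X: "X n \<in> carrier_mat m (rk n)" by (rule X_carrier[OF n])
    have P: "Sinv a \<in> carrier_mat m m" and opP: "op_bounded c (Sinv a)"
      unfolding c_def using a op_bounded_Sinv by auto
    have "G a n \<in> carrier_mat (rk n) (rk n)"
      unfolding G_def using X P by (meson mat_adjoint_carrier mult_carrier_mat)
    then have Q\<^sub>1: "?Q\<^sub>1 \<in> carrier_mat m m"
      using X P by (meson mat_adjoint_carrier mult_carrier_mat)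
    have r: "r a \<in> carrier_vec m" "vnorm2 (r a) \<le> \<rho>" and bn: "b n \<in> carrier_vec m" "vnorm2 (b n) \<le> \<nu>"
      using n \<rho>(2)[OF a] unfolding \<nu>_def by auto
    let ?w = "hform (b n) (Sinv a) (b n) + hform (r a) ?Q\<^sub>1 (r a) + 2 * hform (r a) (Q a n d) (b n)"
    let ?z = "hform (b n) (Q a n d) (b n)"
    have QR: "Re (hform (r a) (Q a n d) (r a))
        = vnorm2 ((mat_adjoint (X n) * Sinv a) *\<^sub>v r a) - d * Re (hform (r a) ?Q\<^sub>1 (r a))"
      using hform_Q[OF n a r(1) r(1)] hform_Sinv_B_Sinv[OF n a r(1)] by simp
    have poly: "F + d * T - 2 * d * H + d^2 * Bb - d * (V - d * Q') + 2 * d^2 * Qrb - d^3 * Qbb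
        - F - (T - V - 2 * H) * d = d^2 * (Bb + Q' + 2 * Qrb) - d^3 * Qbb" for F T H Bb V Q' Qrb Qbb :: real
      by (simp add: algebra_simps power2_eq_square power3_eq_cube)
    have Re_w: "Re ?w = Re (hform (b n) (Sinv a) (b n)) + Re (hform (r a) ?Q\<^sub>1 (r a)) + 2 * Re (hform (r a) (Q a n d) (b n))"
      by simp
    have remainder: "p_approx N L M s hb R Rh sw2 y a n d - f a - g a n * d = d^2 * Re ?w - d^3 * Re ?z"
      unfolding p_approx_eq gradf_eq QR poly Re_w ..
    have "cmod ?w \<le> cmod (hform (b n) (Sinv a) (b n) + hform (r a) ?Q\<^sub>1 (r a)) + cmod (2 * hform (r a) (Q a n d) (b n))"
      by (rule norm_triangle_ineq)
    also have "\<dots> \<le> cmod (hform (b n) (Sinv a) (b n)) + cmod (hform (r a) ?Q\<^sub>1 (r a)) + 2 * cmod (hform (r a) (Q a n d) (b n))"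
      using norm_triangle_ineq[of "hform (b n) (Sinv a) (b n)" "hform (r a) ?Q\<^sub>1 (r a)"] by (simp add: norm_mult)
    finally have "cmod ?w + cmod ?z \<le> K"
      using cmod_hform_le[OF P opP c bn bn] cmod_hform_le[OF Q\<^sub>1 \<kappa>\<^sub>1(2)[OF a] \<kappa>\<^sub>1(1) r r]
        \<kappa>\<^sub>Q(2)[OF a d r bn] \<kappa>\<^sub>Q(2)[OF a d bn bn] unfolding K_def by (smt (verit))
    then have "d^2 * (cmod ?w + cmod ?z) \<le> K * d^2"
      by (metis mult.commute mult_left_mono zero_le_power2)
    then show "\<bar>p_approx N L M s hb R Rh sw2 y a n d - f a - g a n * d\<bar> \<le> K * d^2"
      unfolding remainder using abs_cubic_remainder_le[OF d, of ?w ?z] by linarith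
  qed
qed

lemma second_order_bounds_coordinate:
  assumes n: "n < N"
  shows "\<exists>K. \<forall>a d. in_box N a \<longrightarrow> 0 \<le> a n + d \<longrightarrow> a n + d \<le> 1 \<longrightarrow>
    f (a(n := a n + d)) \<le> f a + g a n * d + K * d^2
    \<and> \<bar>p_approx N L M s hb R Rh sw2 y a n d - f a - g a n * d\<bar> \<le> K * d^2"
proof -
  obtain K\<^sub>1 where K\<^sub>1: "\<And>a d. in_box N a \<Longrightarrow> 0 \<le> a n + d \<Longrightarrow> a n + d \<le> 1 \<Longrightarrow>
      ln (Re (det (S (a(n := a n + d))))) \<le> ln (Re (det (S a))) + d * Re (mtrace (G a n)) + K\<^sub>1 * d^2"
    using logdet_update_le[OF n] by blast
  obtain K\<^sub>2 where K\<^sub>2: "\<And>a d. in_box N a \<Longrightarrow> 0 \<le> a n + d \<Longrightarrow> a n + d \<le> 1 \<Longrightarrow>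
      Re (hform (r (a(n := a n + d))) (Sinv (a(n := a n + d))) (r (a(n := a n + d))))
        \<le> Re (hform (r a) (Sinv a) (r a)) - d * vnorm2 ((mat_adjoint (X n) * Sinv a) *\<^sub>v r a)
          - 2 * d * Re (hform (r a) (Sinv a) (b n)) + K\<^sub>2 * d^2"
    using quad_form_update_le[OF n] by blast
  obtain K\<^sub>3 where K\<^sub>3: "\<And>a d. in_box N a \<Longrightarrow> 0 \<le> a n + d \<Longrightarrow> a n + d \<le> 1 \<Longrightarrow>
      \<bar>p_approx N L M s hb R Rh sw2 y a n d - f a - g a n * d\<bar> \<le> K\<^sub>3 * d^2"
    using p_approx_taylor[OF n] by blast
  define K where "K = \<bar>K\<^sub>1\<bar> + \<bar>K\<^sub>2\<bar> + \<bar>K\<^sub>3\<bar>"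
  have K: "K\<^sub>1 * d^2 + K\<^sub>2 * d^2 \<le> K * d^2" "K\<^sub>3 * d^2 \<le> K * d^2" for d :: real
  proof -
    have "k * d^2 \<le> \<bar>k\<bar> * d^2" for k :: real by (intro mult_right_mono) auto
    moreover have "K * d^2 = \<bar>K\<^sub>1\<bar> * d^2 + \<bar>K\<^sub>2\<bar> * d^2 + \<bar>K\<^sub>3\<bar> * d^2"
      unfolding K_def by (simp add: algebra_simps)
    moreover have "0 \<le> \<bar>k\<bar> * d^2" for k :: real by simp
    ultimately show "K\<^sub>1 * d^2 + K\<^sub>2 * d^2 \<le> K * d^2" "K\<^sub>3 * d^2 \<le> K * d^2"
      by (smt (verit))+
  qed
  show ?thesis
  proof (intro exI[of _ K] allI impI conjI)
    fix a d assume ad: "in_box N a" "0 \<le> a n + d" "a n + d \<le> 1"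
    show "f (a(n := a n + d)) \<le> f a + g a n * d + K * d^2"
      using K\<^sub>1[OF ad] K\<^sub>2[OF ad] K(1)[of d] unfolding fobj_eq gradf_eq by (simp add: algebra_simps)
    show "\<bar>p_approx N L M s hb R Rh sw2 y a n d - f a - g a n * d\<bar> \<le> K * d^2"
      using K\<^sub>3[OF ad] K(2)[of d] by linarith
  qed
qed

definition second_order_bounds :: "real \<Rightarrow> bool" where
  "second_order_bounds K \<longleftrightarrow> (\<forall>n<N. \<forall>a d. in_box N a \<longrightarrow> 0 \<le> a n + d \<longrightarrow> a n + d \<le> 1 \<longrightarrow>
    f (a(n := a n + d)) \<le> f a + g a n * d + K * d^2
    \<and> \<bar>p_approx N L M s hb R Rh sw2 y a n d - f a - g a n * d\<bar> \<le> K * d^2)"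

lemma second_order_bounds_exist: "\<exists>K\<ge>0. second_order_bounds K"
proof -
  obtain Kn where Kn: "\<And>n a d. n < N \<Longrightarrow> in_box N a \<Longrightarrow> 0 \<le> a n + d \<Longrightarrow> a n + d \<le> 1 \<Longrightarrow>
    f (a(n := a n + d)) \<le> f a + g a n * d + Kn n * d^2
    \<and> \<bar>p_approx N L M s hb R Rh sw2 y a n d - f a - g a n * d\<bar> \<le> Kn n * d^2"
    using second_order_bounds_coordinate by metis
  define K where "K = (\<Sum>n<N. \<bar>Kn n\<bar>)"
  have K: "Kn n * d^2 \<le> K * d^2" if "n < N" for n d
  proof (rule mult_right_mono)
    show "Kn n \<le> K"
      unfolding K_def using that member_le_sum[of n "{..<N}" "\<lambda>n. \<bar>Kn n\<bar>"] by force
  qed simp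
  show ?thesis
    unfolding second_order_bounds_def
  proof (intro exI[of _ K] conjI allI impI)
    show "0 \<le> K" unfolding K_def by (intro sum_nonneg) simp
    fix n a d assume n: "n < N" and ad: "in_box N a" "0 \<le> a n + d" "a n + d \<le> 1"
    show "f (a(n := a n + d)) \<le> f a + g a n * d + K * d^2"
      using Kn[OF n ad] K[OF n, of d] by linarith
    show "\<bar>p_approx N L M s hb R Rh sw2 y a n d - f a - g a n * d\<bar> \<le> K * d^2"
      using Kn[OF n ad] K[OF n, of d] by linarith
  qed
qed

end

theorem theorem1:
  fixes N L M :: nat and sw2 ell :: real
    and s hb :: "nat \<Rightarrow> complex vec" and R Rh :: "nat \<Rightarrow> complex mat" and y :: "complex vec"
  assumes "L > 0" and "M > 0" and "N > 0" and "sw2 > 0"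
    and "\<forall>n<N. s n \<in> carrier_vec L"
    and "\<forall>n<N. hb n \<in> carrier_vec M"
    and "\<forall>n<N. hermitian_psd M (R n)"
    and "\<forall>n<N. Rh n \<in> carrier_mat M (vec_space.rank M (R n))"
    and "\<forall>n<N. Rh n * mat_adjoint (Rh n) = R n"
    and "y \<in> carrier_vec (M*L)"
    and "ell > 0"
    and "\<forall>a b. in_box N a \<longrightarrow> in_box N b \<longrightarrow>
           sqrt (\<Sum>n<N. (gradf N L M s hb R Rh sw2 y a n - gradf N L M s hb R Rh sw2 y b n)^2)
             \<le> ell * sqrt (\<Sum>n<N. (a n - b n)^2)"
  shows "\<exists>c>0. \<forall>a n mu dbar. in_box N a \<longrightarrow> n < N \<longrightarrow> mu \<ge> ell + c \<longrightarrow>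
           dbar \<in> {- a n .. 1 - a n} \<longrightarrow>
           (\<forall>d \<in> {- a n .. 1 - a n}.
              p_approx N L M s hb R Rh sw2 y a n dbar + mu / 2 * dbar^2
                \<le> p_approx N L M s hb R Rh sw2 y a n d + mu / 2 * d^2) \<longrightarrow>
           fobj N L M s hb R sw2 y (a(n := a n + dbar))
             \<le> fobj N L M s hb R sw2 y a
                - (Vres N L M s hb R Rh sw2 y a n)^2 / (2 * (mu + c))"
proof -
  interpret activity_model N L M sw2 s hb R Rh y
  proof
    fix n assume "n < N"
    then show "Rh n \<in> carrier_mat M (dim_col (Rh n))"
      using assms(8) by (metis carrier_matD(1) carrier_matI)
  qed (use assms in auto)
  obtain K where K: "0 \<le> K" "second_order_bounds K"
    using second_order_bounds_exist by blast
  show ?thesis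
  proof (intro exI[of _ "1 + 4 * K"] conjI allI impI)
    show "0 < 1 + 4 * K" using K by simp
    fix a n mu dbar
    assume a: "in_box N a" and n: "n < N" and mu: "ell + (1 + 4 * K) \<le> mu"
      and dbar: "dbar \<in> {- a n .. 1 - a n}"
      and min: "\<forall>d \<in> {- a n .. 1 - a n}. p_approx N L M s hb R Rh sw2 y a n dbar + mu / 2 * dbar^2
                \<le> p_approx N L M s hb R Rh sw2 y a n d + mu / 2 * d^2"
    have "0 \<le> a n" "a n \<le> 1" using a n unfolding in_box_def by auto
    then have "fobj N L M s hb R sw2 y (a(n := a n + dbar)) \<le> fobj N L M s hb R sw2 y a
        - (max (- a n) (min (1 - a n) (- gradf N L M s hb R Rh sw2 y a n)))^2 / (2 * (mu + 1 + 4 * K))"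
      using K(1) mu assms(11) dbar min K(2)[unfolded second_order_bounds_def, rule_format, OF n a]
      by (intro projected_step_decrease[where p = "p_approx N L M s hb R Rh sw2 y a n"]) auto
    then show "fobj N L M s hb R sw2 y (a(n := a n + dbar)) \<le> fobj N L M s hb R sw2 y a
        - (Vres N L M s hb R Rh sw2 y a n)^2 / (2 * (mu + (1 + 4 * K)))"
      unfolding Vres_def proj01_minus_eq power2_abs by (simp add: add.assoc)
  qed
qed

end
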